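(* Every search game (as defined in the context) is weakly acyclic: for every pure strategy profile $s^{1}\in S$ there exists an improvement path $(s^{1},\ldots,s^{T})$ starting at $s^{1}$ such that $s^{T}$ is a pure (Bayesian) Nash equilibrium.
   Context: A search game $G=(N,\Omega,\Pi,\mu,K,c,v)$ consists of: a finite set of players $N=\{1,\ldots,n\}$; a finite set $\Omega$ of locations (the prize is hidden in exactly one location, the true state); for each player $i$ a partition $\Pi_i$ of $\Omega$ into cells, where $\pi_i(\omega)$ denotes the cell of $\Pi_i$ containing $\omega$ (player $i$ observes the cell containing the true location); a common prior $\mu\in\Delta(\Omega)$ with $\mu(\pi_i)>0$ for every cell $\pi_i\in\Pi_i$ and every $i$, where $\mu(E)=\sum_{\omega\in E}\mu(\omega)$; a capacity $K_i\in\mathbb{N}$ for each player; a cost function $c_i:\{0,\ldots,K_i\}\to\mathbb{R}_{\ge 0}$ with $c_i(0)=0$ and $c_i(k+1)-c_i(k)\ge c_i(k)-c_i(k-1)$ for $1\le k\le K_i-1$; rewards $v_i^m(\omega)\ge 0$ for each player $i$, location $\omega$, and $m\in\{1,\ldots,n\}$, with $v_i^{m+1}(\omega)\le v_i^m(\omega)$; and social values $v_{\mathfrak{s}}(\omega)\ge 0$. A pure strategy $s_i$ of player $i$ assigns to each cell $\pi_i\in\Pi_i$ a subset $s_i(\pi_i)\subseteq\pi_i$ with at most $K_i$ elements; $S_i$ is the set of these and $S=\prod_i S_i$. For a profile $s$ let $m_s(\omega)=\sum_{i\in N}\mathbf{1}_{\omega\in s_i(\pi_i(\omega))}$. Player $i$'s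 payoff given location $\omega$ is $u_i(s|\omega)=\mathbf{1}_{\omega\in s_i(\pi_i(\omega))}v_i^{m_s(\omega)}(\omega)-c_i(|s_i(\pi_i(\omega))|)$, and $u_i(s)=\sum_{\omega\in\Omega}\mu(\omega)u_i(s|\omega)$. A profile $s$ is a (pure Bayesian) Nash equilibrium if $u_i(s)\ge u_i(s_i',s_{-i})$ for all $i$ and all $s_i'\in S_i$. A sequence $(s^{1},\ldots,s^{T})$ of pure profiles is an improvement path if for every $t<T$ there is a player $i_t$ with $s^{t}_j=s^{t+1}_j$ for all $j\ne i_t$ and $u_{i_t}(s^{t+1})>u_{i_t}(s^{t})$. *)

theory Defs
  imports Complex_Main
begin

text \<open>Players are the elements of a finite type 'i (so N = UNIV, n = card (UNIV :: 'i set));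
locations are the elements of a finite type 'w (so Omega = UNIV).\<close>

definition is_partition :: "'w set \<Rightarrow> 'w set set \<Rightarrow> bool" where
  "is_partition \<Omega> P \<longleftrightarrow> (\<forall>C\<in>P. C \<noteq> {} \<and> C \<subseteq> \<Omega>) \<and> (\<forall>\<omega>\<in>\<Omega>. \<exists>!C. C \<in> P \<and> \<omega> \<in> C)"

definition cell :: "'w set set \<Rightarrow> 'w \<Rightarrow> 'w set" where
  "cell P \<omega> = (THE C. C \<in> P \<and> \<omega> \<in> C)"

definition search_game ::
  "('i::finite \<Rightarrow> 'w::finite set set) \<Rightarrow> ('w \<Rightarrow> real) \<Rightarrow> ('i \<Rightarrow> nat)
   \<Rightarrow> ('i \<Rightarrow> nat \<Rightarrow> real) \<Rightarrow> ('i \<Rightarrow> nat \<Rightarrow> 'w \<Rightarrow> real) \<Rightarrow> ('w \<Rightarrow> real) \<Rightarrow> bool" where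
  "search_game \<Pi> \<mu> K c v vs \<longleftrightarrow>
     (\<forall>i. is_partition UNIV (\<Pi> i)) \<and>
     (\<forall>\<omega>. \<mu> \<omega> \<ge> 0) \<and> (\<Sum>\<omega>\<in>UNIV. \<mu> \<omega>) = 1 \<and>
     (\<forall>i. \<forall>C\<in>\<Pi> i. (\<Sum>\<omega>\<in>C. \<mu> \<omega>) > 0) \<and>
     (\<forall>i. c i 0 = 0) \<and> (\<forall>i k. k \<le> K i \<longrightarrow> c i k \<ge> 0) \<and>
     (\<forall>i k. 1 \<le> k \<and> k + 1 \<le> K i \<longrightarrow> c i (k + 1) - c i k \<ge> c i k - c i (k - 1)) \<and>
     (\<forall>i \<omega> m. 1 \<le> m \<and> m \<le> card (UNIV :: 'i set) \<longrightarrow> v i m \<omega> \<ge> 0) \<and>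
     (\<forall>i \<omega> m. 1 \<le> m \<and> m + 1 \<le> card (UNIV :: 'i set) \<longrightarrow> v i (m + 1) \<omega> \<le> v i m \<omega>) \<and>
     (\<forall>\<omega>. vs \<omega> \<ge> 0)"

definition strategies :: "('i \<Rightarrow> 'w set set) \<Rightarrow> ('i \<Rightarrow> nat) \<Rightarrow> 'i \<Rightarrow> ('w set \<Rightarrow> 'w set) set" where
  "strategies \<Pi> K i = {\<sigma>. (\<forall>C\<in>\<Pi> i. \<sigma> C \<subseteq> C \<and> card (\<sigma> C) \<le> K i) \<and> (\<forall>C. C \<notin> \<Pi> i \<longrightarrow> \<sigma> C = {})}"

definition profiles :: "('i \<Rightarrow> 'w set set) \<Rightarrow> ('i \<Rightarrow> nat) \<Rightarrow> ('i \<Rightarrow> 'w set \<Rightarrow> 'w set) set" where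
  "profiles \<Pi> K = {s. \<forall>i. s i \<in> strategies \<Pi> K i}"

definition searchers :: "('i::finite \<Rightarrow> 'w set set) \<Rightarrow> ('i \<Rightarrow> 'w set \<Rightarrow> 'w set) \<Rightarrow> 'w \<Rightarrow> nat" where
  "searchers \<Pi> s \<omega> = card {i. \<omega> \<in> s i (cell (\<Pi> i) \<omega>)}"

definition payoff_at ::
  "('i::finite \<Rightarrow> 'w set set) \<Rightarrow> ('i \<Rightarrow> nat \<Rightarrow> real) \<Rightarrow> ('i \<Rightarrow> nat \<Rightarrow> 'w \<Rightarrow> real)
   \<Rightarrow> ('i \<Rightarrow> 'w set \<Rightarrow> 'w set) \<Rightarrow> 'i \<Rightarrow> 'w \<Rightarrow> real" where
  "payoff_at \<Pi> c v s i \<omega> =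
     (if \<omega> \<in> s i (cell (\<Pi> i) \<omega>) then v i (searchers \<Pi> s \<omega>) \<omega> else 0)
     - c i (card (s i (cell (\<Pi> i) \<omega>)))"

definition payoff ::
  "('i::finite \<Rightarrow> 'w::finite set set) \<Rightarrow> ('w \<Rightarrow> real) \<Rightarrow> ('i \<Rightarrow> nat \<Rightarrow> real) \<Rightarrow> ('i \<Rightarrow> nat \<Rightarrow> 'w \<Rightarrow> real)
   \<Rightarrow> ('i \<Rightarrow> 'w set \<Rightarrow> 'w set) \<Rightarrow> 'i \<Rightarrow> real" where
  "payoff \<Pi> \<mu> c v s i = (\<Sum>\<omega>\<in>UNIV. \<mu> \<omega> * payoff_at \<Pi> c v s i \<omega>)"

definition is_nash ::
  "('i::finite \<Rightarrow> 'w::finite set set) \<Rightarrow> ('w \<Rightarrow> real) \<Rightarrow> ('i \<Rightarrow> nat) \<Rightarrow> ('i \<Rightarrow> nat \<Rightarrow> real)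
   \<Rightarrow> ('i \<Rightarrow> nat \<Rightarrow> 'w \<Rightarrow> real) \<Rightarrow> ('i \<Rightarrow> 'w set \<Rightarrow> 'w set) \<Rightarrow> bool" where
  "is_nash \<Pi> \<mu> K c v s \<longleftrightarrow> s \<in> profiles \<Pi> K \<and>
     (\<forall>i. \<forall>\<sigma>\<in>strategies \<Pi> K i. payoff \<Pi> \<mu> c v s i \<ge> payoff \<Pi> \<mu> c v (s(i := \<sigma>)) i)"

definition improvement_path ::
  "('i::finite \<Rightarrow> 'w::finite set set) \<Rightarrow> ('w \<Rightarrow> real) \<Rightarrow> ('i \<Rightarrow> nat) \<Rightarrow> ('i \<Rightarrow> nat \<Rightarrow> real)
   \<Rightarrow> ('i \<Rightarrow> nat \<Rightarrow> 'w \<Rightarrow> real) \<Rightarrow> ('i \<Rightarrow> 'w set \<Rightarrow> 'w set) list \<Rightarrow> bool" where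
  "improvement_path \<Pi> \<mu> K c v ps \<longleftrightarrow> ps \<noteq> [] \<and> set ps \<subseteq> profiles \<Pi> K \<and>
     (\<forall>t. t + 1 < length ps \<longrightarrow>
        (\<exists>i. (\<forall>j. j \<noteq> i \<longrightarrow> (ps ! (t + 1)) j = (ps ! t) j) \<and>
             payoff \<Pi> \<mu> c v (ps ! (t + 1)) i > payoff \<Pi> \<mu> c v (ps ! t) i))"

end

theory Submission
  imports Defs
begin

text \<open>
  Player \<open>i\<close>'s payoff splits over the cells of her partition: in a cell \<open>C\<close> she picks
  \<open>A \<subseteq> C\<close> with \<open>|A| \<le> K\<^sub>i\<close>, earns \<open>\<mu>(w) v\<^sub>i\<^sup>m(w)\<close> for each \<open>w \<in> A\<close> that \<open>m\<close> players
  search, and pays \<open>\<mu>(C) c\<^sub>i(|A|)\<close>. Against fixed opponents this is a choice problem with a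
  convex cost, in which a choice is optimal as soon as no single addition, removal or
  swap improves it.

  Declare some (player, location) pairs frozen: these locations must stay searched. By
  induction on the number of unfrozen pairs, from every profile an improvement path leads
  to an equilibrium relative to the frozen pairs. To unfreeze a pair \<open>(i, x)\<close> of such an
  equilibrium with searcher counts \<open>R\<close>, player \<open>i\<close> drops \<open>x\<close> or swaps it for some \<open>v\<close>;
  relative to \<open>R\<close>, one searcher is then missing at \<open>x\<close> and one may be in surplus at \<open>v\<close>.
  Each subsequent improving move shifts or removes the surplus or, once there is none,
  shifts or fills the missing searcher, and it strictly increases the potential in which
  location \<open>w\<close> is worth \<open>\<mu>(w) v\<^sub>j\<^sup>m(w)\<close> to player \<open>j\<close>, with \<open>m = R(w)\<close>, or \<open>m = R(w) + 1\<close>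
  while a surplus remains. Hence the repair ends in an equilibrium for fewer frozen pairs;
  with no pair frozen this is a Nash equilibrium.
\<close>

section \<open>Exchange-optimal choices under a convex cost\<close>

definition discrete_convex :: "nat \<Rightarrow> (nat \<Rightarrow> real) \<Rightarrow> bool" where
  "discrete_convex K D \<longleftrightarrow> (\<forall>k. 1 \<le> k \<longrightarrow> k + 1 \<le> K \<longrightarrow> D k - D (k - 1) \<le> D (k + 1) - D k)"

lemma discrete_convex_increment_mono:
  assumes "discrete_convex K D" "1 \<le> i" "i \<le> j" "j \<le> K"
  shows "D i - D (i - 1) \<le> D j - D (j - 1)"
  using assms(3)
proof (induction j rule: dec_induct)
  case base
  then show ?case by simp
next
  case (step j)
  have "D j - D (j - 1) \<le> D (j + 1) - D j"
    using assms(1,2,4) step.hyps unfolding discrete_convex_def by auto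
  with step.IH show ?case by simp
qed

lemma discrete_convex_secant_lower:
  assumes "discrete_convex K D" "a \<le> b" "b \<le> K"
  shows "real (b - a) * (D (a + 1) - D a) \<le> D b - D a"
proof -
  have "real (b - a) * (D (a + 1) - D a) = (\<Sum>k = a..<b. D (a + 1) - D a)" by simp
  also have "\<dots> \<le> (\<Sum>k = a..<b. D (Suc k) - D k)"
  proof (rule sum_mono)
    fix k assume "k \<in> {a..<b}"
    then show "D (a + 1) - D a \<le> D (Suc k) - D k"
      using discrete_convex_increment_mono[OF assms(1), of "a + 1" "Suc k"] assms(3) by simp
  qed
  also have "\<dots> = D b - D a" by (rule sum_Suc_diff'[OF assms(2)])
  finally show ?thesis .
qed

lemma discrete_convex_secant_upper:
  assumes "discrete_convex K D" "a \<le> b" "b \<le> K"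
  shows "D b - D a \<le> real (b - a) * (D b - D (b - 1))"
proof -
  have "D b - D a = (\<Sum>k = a..<b. D (Suc k) - D k)" by (rule sum_Suc_diff'[OF assms(2), symmetric])
  also have "\<dots> \<le> (\<Sum>k = a..<b. D b - D (b - 1))"
  proof (rule sum_mono)
    fix k assume "k \<in> {a..<b}"
    then show "D (Suc k) - D k \<le> D b - D (b - 1)"
      using discrete_convex_increment_mono[OF assms(1), of "Suc k" b] assms(3) by simp
  qed
  also have "\<dots> = real (b - a) * (D b - D (b - 1))" by simp
  finally show ?thesis .
qed

definition net_value :: "('a \<Rightarrow> real) \<Rightarrow> (nat \<Rightarrow> real) \<Rightarrow> 'a set \<Rightarrow> real" where
  "net_value g D X = sum g X - D (card X)"

text \<open>No swap, no removal of an element outside \<open>F\<close> and no addition improves \<open>A \<subseteq> C\<close>.\<close>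

definition exchange_optimal ::
  "('a \<Rightarrow> real) \<Rightarrow> (nat \<Rightarrow> real) \<Rightarrow> nat \<Rightarrow> 'a set \<Rightarrow> 'a set \<Rightarrow> 'a set \<Rightarrow> bool" where
  "exchange_optimal g D K C F A \<longleftrightarrow>
     (\<forall>u\<in>A - F. \<forall>w\<in>C - A. g w \<le> g u) \<and>
     (\<forall>u\<in>A - F. D (card A) - D (card A - 1) \<le> g u) \<and>
     (card A < K \<longrightarrow> (\<forall>w\<in>C - A. g w \<le> D (card A + 1) - D (card A)))"

lemma exchange_optimal_mono:
  assumes "exchange_optimal g D K C F A"
    and "\<And>w. w \<in> A - F \<Longrightarrow> g w \<le> g' w" and "\<And>w. w \<in> C - A \<Longrightarrow> g' w \<le> g w"
  shows "exchange_optimal g' D K C F A"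
  using assms unfolding exchange_optimal_def by (meson order_trans)

lemma exchange_optimal_cong:
  assumes "A \<subseteq> C" "\<And>w. w \<in> C \<Longrightarrow> g w = g' w"
  shows "exchange_optimal g D K C F A \<longleftrightarrow> exchange_optimal g' D K C F A"
proof
  assume "exchange_optimal g D K C F A"
  then show "exchange_optimal g' D K C F A" by (rule exchange_optimal_mono) (use assms in auto)
next
  assume "exchange_optimal g' D K C F A"
  then show "exchange_optimal g D K C F A" by (rule exchange_optimal_mono) (use assms in auto)
qed

lemma exchange_optimal_frozen_mono:
  "exchange_optimal g D K C F A \<Longrightarrow> F \<subseteq> F' \<Longrightarrow> exchange_optimal g D K C F' A"
  unfolding exchange_optimal_def by blast

lemma exchange_optimal_subset:
  "exchange_optimal g D K C F A \<Longrightarrow> C' \<subseteq> C \<Longrightarrow> exchange_optimal g D K C' F A"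
  unfolding exchange_optimal_def by blast

lemma sum_diff_le_threshold:
  fixes g :: "'a \<Rightarrow> real"
  assumes "\<And>q. q \<in> Q \<Longrightarrow> g q \<le> \<theta>" and "\<And>p. p \<in> P \<Longrightarrow> \<theta> \<le> g p"
  shows "sum g Q - sum g P \<le> (real (card Q) - real (card P)) * \<theta>"
  using sum_bounded_above[of Q g \<theta>] sum_bounded_below[of P \<theta> g] assms
  by (simp add: left_diff_distrib)

lemma exchange_gain_le_above:
  fixes g :: "'a \<Rightarrow> real"
  assumes "finite P" "card P \<le> card Q"
    and swap: "\<And>p q. p \<in> P \<Longrightarrow> q \<in> Q \<Longrightarrow> g q \<le> g p"
    and above: "\<And>q. q \<in> Q \<Longrightarrow> g q \<le> d"
  shows "sum g Q - sum g P \<le> real (card Q - card P) * d"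
proof -
  define \<theta> where "\<theta> = Min (insert d (g ` P))"
  have "sum g Q - sum g P \<le> (real (card Q) - real (card P)) * \<theta>"
    using assms unfolding \<theta>_def by (intro sum_diff_le_threshold) auto
  also have "\<dots> \<le> real (card Q - card P) * d"
    using assms(1,2) unfolding \<theta>_def by (simp add: of_nat_diff mult_left_mono)
  finally show ?thesis .
qed

lemma exchange_gain_le_below:
  fixes g :: "'a \<Rightarrow> real"
  assumes "finite Q" "card Q \<le> card P"
    and swap: "\<And>p q. p \<in> P \<Longrightarrow> q \<in> Q \<Longrightarrow> g q \<le> g p"
    and below: "\<And>p. p \<in> P \<Longrightarrow> d \<le> g p"
  shows "sum g Q - sum g P \<le> - (real (card P - card Q) * d)"
proof -
  define \<theta> where "\<theta> = Max (insert d (g ` Q))"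
  have "sum g Q - sum g P \<le> (real (card Q) - real (card P)) * \<theta>"
    using assms unfolding \<theta>_def by (intro sum_diff_le_threshold) auto
  also have "\<dots> = - (real (card P - card Q) * \<theta>)"
    using assms(2) by (simp add: of_nat_diff algebra_simps)
  also have "\<dots> \<le> - (real (card P - card Q) * d)"
    using assms(1) unfolding \<theta>_def by (simp add: mult_left_mono)
  finally show ?thesis .
qed

lemma exchange_optimal_imp_optimal:
  assumes "finite C" "F \<subseteq> A" "A \<subseteq> C" "card A \<le> K" "discrete_convex K D"
    and opt: "exchange_optimal g D K C F A"
    and "F \<subseteq> X" "X \<subseteq> C" "card X \<le> K"
  shows "net_value g D X \<le> net_value g D A"
proof -
  define P Q where "P = A - X" and "Q = X - A"
  have fin: "finite A" "finite X" "finite P" "finite Q"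
    using assms(1,3,8) finite_subset unfolding P_def Q_def by blast+
  have swap: "g q \<le> g p" if "p \<in> P" "q \<in> Q" for p q
    using opt that assms(7,8) unfolding exchange_optimal_def P_def Q_def by blast
  have "net_value g D X - net_value g D A = sum g Q - sum g P - (D (card X) - D (card A))"
    using sum.Int_Diff[OF fin(2), of g A] sum.Int_Diff[OF fin(1), of g X]
    unfolding net_value_def P_def Q_def by (simp add: Int_commute)
  moreover have cards: "card X + card P = card A + card Q"
    using card_Int_Diff[OF fin(2), of A] card_Int_Diff[OF fin(1), of X]
    unfolding P_def Q_def by (simp add: Int_commute)
  moreover have "sum g Q - sum g P \<le> D (card X) - D (card A)"
  proof (cases "card A < card X")
    case True
    then have above: "g q \<le> D (card A + 1) - D (card A)" if "q \<in> Q" for q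
      using opt that assms(8,9) unfolding exchange_optimal_def Q_def by auto
    have "card P \<le> card Q" "card Q - card P = card X - card A" using cards True by linarith+
    with exchange_gain_le_above[where g = g and P = P and Q = Q, OF fin(3) _ swap above]
    have "sum g Q - sum g P \<le> real (card X - card A) * (D (card A + 1) - D (card A))" by simp
    also have "\<dots> \<le> D (card X) - D (card A)"
      using discrete_convex_secant_lower[OF assms(5)] True assms(9) by simp
    finally show ?thesis .
  next
    case False
    have below: "D (card A) - D (card A - 1) \<le> g p" if "p \<in> P" for p
      using opt that assms(7) unfolding exchange_optimal_def P_def by auto
    have "card Q \<le> card P" "card P - card Q = card A - card X" using cards False by linarith+
    with exchange_gain_le_below[where g = g and P = P and Q = Q, OF fin(4) _ swap below]
    have "sum g Q - sum g P \<le> - (real (card A - card X) * (D (card A) - D (card A - 1)))" by simp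
    also have "\<dots> \<le> D (card X) - D (card A)"
      using discrete_convex_secant_upper[OF assms(5) _ assms(4), of "card X"] False by simp
    finally show ?thesis .
  qed
  ultimately show ?thesis by linarith
qed

lemma exchange_optimal_unfreezeI:
  assumes "exchange_optimal g D K C (insert z F) A"
    and "\<And>w. w \<in> C - A \<Longrightarrow> g w \<le> g z" and "D (card A) - D (card A - 1) \<le> g z"
  shows "exchange_optimal g D K C F A"
  using assms unfolding exchange_optimal_def by (metis Diff_iff insertE insertI2)

lemma exchange_optimal_swap_in_best:
  assumes "finite A" "z \<in> A" "v \<in> C - A"
    and opt: "exchange_optimal g D K C (insert z F) A"
    and best: "\<And>w. w \<in> C - A \<Longrightarrow> g w \<le> g v"
    and "D (card A) - D (card A - 1) \<le> g v" and "g z < g v"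
  shows "net_value g D A < net_value g D (insert v (A - {z}))"
    and "exchange_optimal g D K C F (insert v (A - {z}))"
proof -
  have "0 < card A" using assms(1,2) card_gt_0_iff by blast
  then have card: "card (insert v (A - {z})) = card A"
    using assms(1-3) by simp
  show "net_value g D A < net_value g D (insert v (A - {z}))"
    using assms(1-3,7) sum.remove[OF assms(1,2), of g] unfolding net_value_def card by simp
  have below_v: "g w \<le> g v" if "w \<in> C - insert v (A - {z})" for w
    using that best assms(7) by (cases "w = z") auto
  note opt = opt[unfolded exchange_optimal_def]
  show "exchange_optimal g D K C F (insert v (A - {z}))"
    unfolding exchange_optimal_def card
  proof (intro conjI ballI impI)
    fix u w assume u: "u \<in> insert v (A - {z}) - F" and w: "w \<in> C - insert v (A - {z})"
    note below_v[OF w]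
    moreover have "g v \<le> g u" if "u \<noteq> v" using opt u that assms(3) by blast
    ultimately show "g w \<le> g u" by (cases "u = v") auto
  next
    fix u assume "u \<in> insert v (A - {z}) - F"
    then show "D (card A) - D (card A - 1) \<le> g u" using opt assms(6) by auto
  next
    fix w assume "card A < K" and w: "w \<in> C - insert v (A - {z})"
    have "g v \<le> D (card A + 1) - D (card A)" using opt \<open>card A < K\<close> assms(3) by blast
    then show "g w \<le> D (card A + 1) - D (card A)" using below_v[OF w] by simp
  qed
qed

lemma exchange_optimal_drop:
  assumes "finite A" "z \<in> A" "card A \<le> K" "discrete_convex K D"
    and opt: "exchange_optimal g D K C (insert z F) A"
    and below: "\<And>w. w \<in> C - A \<Longrightarrow> g w \<le> D (card A) - D (card A - 1)"
    and "g z < D (card A) - D (card A - 1)"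
  shows "net_value g D A < net_value g D (A - {z})"
    and "exchange_optimal g D K C F (A - {z})"
proof -
  define k where "k = card A"
  have card: "card (A - {z}) = k - 1" and "1 \<le> k"
    using assms(1,2) card_gt_0_iff[of A] unfolding k_def by auto
  show "net_value g D A < net_value g D (A - {z})"
    using assms(7) sum.remove[OF assms(1,2), of g] \<open>1 \<le> k\<close>
    unfolding net_value_def card k_def by simp
  have convex: "D (k - 1) - D (k - 1 - 1) \<le> D k - D (k - 1)" if "u \<in> A - {z}" for u
  proof -
    have "card {u, z} \<le> k" using that assms(1,2) card_mono unfolding k_def by fastforce
    then have "2 \<le> k" using that by simp
    then show ?thesis
      using discrete_convex_increment_mono[OF assms(4), of "k - 1" k] assms(3) unfolding k_def by simp
  qed
  have dropped: "g w \<le> D k - D (k - 1)" if "w \<in> C - (A - {z})" for w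
    using that below assms(7) unfolding k_def by (cases "w = z") auto
  note opt = opt[unfolded exchange_optimal_def k_def[symmetric]]
  show "exchange_optimal g D K C F (A - {z})"
    unfolding exchange_optimal_def card
  proof (intro conjI ballI impI)
    fix u w assume u: "u \<in> A - {z} - F" and w: "w \<in> C - (A - {z})"
    from u have "D k - D (k - 1) \<le> g u" using opt by blast
    then show "g w \<le> g u" using dropped[OF w] by simp
  next
    fix u assume u: "u \<in> A - {z} - F"
    then have "D k - D (k - 1) \<le> g u" using opt by blast
    then show "D (k - 1) - D (k - 1 - 1) \<le> g u" using convex[of u] u by simp
  next
    fix w assume "w \<in> C - (A - {z})"
    with dropped \<open>1 \<le> k\<close> show "g w \<le> D (k - 1 + 1) - D (k - 1)" by simp
  qed
qed

lemma finite_arg_max: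
  fixes g :: "'a \<Rightarrow> 'b::linorder"
  assumes "finite S" "S \<noteq> {}"
  obtains v where "v \<in> S" "\<And>w. w \<in> S \<Longrightarrow> g w \<le> g v"
proof -
  have "Max (g ` S) \<in> g ` S" using assms by simp
  then obtain v where "v \<in> S" "g v = Max (g ` S)" by auto
  with assms that show thesis by simp
qed

lemma finite_arg_min:
  fixes g :: "'a \<Rightarrow> 'b::linorder"
  assumes "finite S" "S \<noteq> {}"
  obtains u where "u \<in> S" "\<And>w. w \<in> S \<Longrightarrow> g u \<le> g w"
proof -
  have "Min (g ` S) \<in> g ` S" using assms by simp
  then obtain u where "u \<in> S" "g u = Min (g ` S)" by auto
  with assms that show thesis by simp
qed

lemma exchange_optimal_unfreeze:
  assumes "finite C" "A \<subseteq> C" "card A \<le> K" "discrete_convex K D" "z \<in> A"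
    and opt: "exchange_optimal g D K C (insert z F) A"
    and not_opt: "\<not> exchange_optimal g D K C F A"
  obtains A' where "A' = A - {z} \<or> (\<exists>v\<in>C - A. A' = insert v (A - {z}))"
    and "net_value g D A < net_value g D A'" and "exchange_optimal g D K C F A'"
proof -
  define d where "d = D (card A) - D (card A - 1)"
  have "finite A" using assms(1,2) finite_subset by blast
  have fail: "(\<exists>w\<in>C - A. g z < g w) \<or> g z < d"
    using exchange_optimal_unfreezeI[OF opt] not_opt unfolding d_def by force
  show thesis
  proof (cases "\<exists>v\<in>C - A. (\<forall>w\<in>C - A. g w \<le> g v) \<and> d \<le> g v \<and> g z < g v")
    case True
    then obtain v where "v \<in> C - A" "\<And>w. w \<in> C - A \<Longrightarrow> g w \<le> g v" "d \<le> g v" "g z < g v"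
      by blast
    from exchange_optimal_swap_in_best
      [OF \<open>finite A\<close> \<open>z \<in> A\<close> this(1) opt this(2) this(3-4)[unfolded d_def]]
    show thesis using that \<open>v \<in> C - A\<close> by blast
  next
    case False
    have below: "g w < d" if w: "w \<in> C - A" for w
    proof -
      have "finite (C - A)" "C - A \<noteq> {}" using assms(1) w by auto
      then obtain v where v: "v \<in> C - A" "\<And>w. w \<in> C - A \<Longrightarrow> g w \<le> g v"
        using finite_arg_max[of "C - A" g] by blast
      with False have "\<not> (d \<le> g v \<and> g z < g v)" by blast
      with fail v have "g v < d" by force
      with v(2)[OF w] show ?thesis by simp
    qed
    with fail have "g z < d" by force
    from exchange_optimal_drop[OF \<open>finite A\<close> \<open>z \<in> A\<close> assms(3,4) opt _ this[unfolded d_def]]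
    show thesis using that below less_imp_le unfolding d_def by blast
  qed
qed

lemma exchange_optimal_extendI:
  assumes "exchange_optimal g D K (C - {x}) F A" "x \<notin> A"
    and "\<And>u. u \<in> A - F \<Longrightarrow> g x \<le> g u"
    and "card A < K \<Longrightarrow> g x \<le> D (card A + 1) - D (card A)"
  shows "exchange_optimal g D K C F A"
  using assms unfolding exchange_optimal_def
proof (intro conjI ballI impI)
  fix u w assume "u \<in> A - F" "w \<in> C - A"
  then show "g w \<le> g u" using assms by (cases "w = x") (auto simp: exchange_optimal_def)
next
  fix w assume "card A < K" "w \<in> C - A"
  then show "g w \<le> D (card A + 1) - D (card A)"
    using assms by (cases "w = x") (auto simp: exchange_optimal_def)
qed (use assms in \<open>auto simp: exchange_optimal_def\<close>)

lemma exchange_optimal_add: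
  assumes "finite A" "x \<in> C - A" "card A < K" "discrete_convex K D"
    and opt: "exchange_optimal g D K (C - {x}) F A"
    and "D (card A + 1) - D (card A) < g x"
    and above: "\<And>u. u \<in> A - F \<Longrightarrow> D (card A + 1) - D (card A) \<le> g u"
  shows "net_value g D A < net_value g D (insert x A)"
    and "exchange_optimal g D K C F (insert x A)"
proof -
  define k where "k = card A"
  have card: "card (insert x A) = k + 1" using assms(1,2) unfolding k_def by simp
  show "net_value g D A < net_value g D (insert x A)"
    using assms(1,2,6) unfolding net_value_def card k_def by simp
  note opt = opt[unfolded exchange_optimal_def k_def[symmetric]]
  have outside: "g w \<le> D (k + 1) - D k" if "w \<in> C - insert x A" for w
    using opt that assms(3) unfolding k_def by blast
  show "exchange_optimal g D K C F (insert x A)"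
    unfolding exchange_optimal_def card
  proof (intro conjI ballI impI)
    fix u w assume u: "u \<in> insert x A - F" and w: "w \<in> C - insert x A"
    show "g w \<le> g u"
    proof (cases "u = x")
      case True
      then show ?thesis using outside[OF w] assms(6) unfolding k_def by simp
    next
      case False
      then show ?thesis using opt u w by blast
    qed
  next
    fix u assume "u \<in> insert x A - F"
    then show "D (k + 1) - D (k + 1 - 1) \<le> g u"
      using above assms(6) unfolding k_def by (cases "u = x") auto
  next
    fix w assume "k + 1 < K" and w: "w \<in> C - insert x A"
    then have "D (k + 1) - D k \<le> D (k + 1 + 1) - D (k + 1)"
      using assms(4)[unfolded discrete_convex_def, rule_format, of "k + 1"] by simp
    with outside[OF w] show "g w \<le> D (k + 1 + 1) - D (k + 1)" by simp
  qed
qed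

lemma exchange_optimal_swap_out_worst:
  assumes "finite A" "x \<in> C - A" "u \<in> A - F"
    and opt: "exchange_optimal g D K (C - {x}) F A"
    and worst: "\<And>u'. u' \<in> A - F \<Longrightarrow> g u \<le> g u'"
    and "g u < g x" and "card A < K \<Longrightarrow> g u \<le> D (card A + 1) - D (card A)"
  shows "net_value g D A < net_value g D (insert x (A - {u}))"
    and "exchange_optimal g D K C F (insert x (A - {u}))"
proof -
  have "0 < card A" using assms(1,3) card_gt_0_iff by blast
  then have card: "card (insert x (A - {u})) = card A"
    using assms(1-3) by simp
  show "net_value g D A < net_value g D (insert x (A - {u}))"
    using assms(1-3,6) sum.remove[OF assms(1), of u g] unfolding net_value_def card by simp
  note opt = opt[unfolded exchange_optimal_def]
  show "exchange_optimal g D K C F (insert x (A - {u}))"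
    unfolding exchange_optimal_def card
  proof (intro conjI ballI impI)
    fix u' w assume u': "u' \<in> insert x (A - {u}) - F" and w: "w \<in> C - insert x (A - {u})"
    have "g w \<le> g u" if "w \<noteq> u" using opt assms(3) w that by blast
    moreover have "g u \<le> g u'" using u' worst assms(6) by (cases "u' = x") auto
    moreover have "g w \<le> g u'" if "w \<noteq> u" "u' \<noteq> x" using opt u' w that by blast
    ultimately show "g w \<le> g u'" by (cases "w = u") auto
  next
    fix u' assume "u' \<in> insert x (A - {u}) - F"
    moreover have "D (card A) - D (card A - 1) \<le> g u" using opt assms(3) by blast
    ultimately show "D (card A) - D (card A - 1) \<le> g u'" using opt assms(6) by (cases "u' = x") auto
  next
    fix w assume "card A < K" and w: "w \<in> C - insert x (A - {u})"
    then show "g w \<le> D (card A + 1) - D (card A)" using opt assms(7) by (cases "w = u") auto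
  qed
qed

lemma exchange_optimal_extend:
  assumes "finite C" "A \<subseteq> C" "discrete_convex K D" "x \<in> C - A"
    and opt: "exchange_optimal g D K (C - {x}) F A"
    and not_opt: "\<not> exchange_optimal g D K C F A"
  obtains A' where "(A' = insert x A \<and> card A < K) \<or> (\<exists>u\<in>A - F. A' = insert x (A - {u}))"
    and "net_value g D A < net_value g D A'" and "exchange_optimal g D K C F A'"
proof -
  define d where "d = D (card A + 1) - D (card A)"
  have "finite A" using assms(1,2) finite_subset by blast
  have fail: "(\<exists>u\<in>A - F. g u < g x) \<or> (card A < K \<and> d < g x)"
    using exchange_optimal_extendI[OF opt] assms(4) not_opt unfolding d_def by force
  show thesis
  proof (cases "card A < K \<and> d < g x \<and> (\<forall>u\<in>A - F. d \<le> g u)")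
    case True
    with exchange_optimal_add[OF \<open>finite A\<close> assms(4) _ assms(3) opt] that show thesis
      unfolding d_def by blast
  next
    case False
    have "A - F \<noteq> {}" using fail False by auto
    then obtain u where u: "u \<in> A - F" "\<And>u'. u' \<in> A - F \<Longrightarrow> g u \<le> g u'"
      using finite_arg_min[of "A - F" g] \<open>finite A\<close> by blast
    have "g u < g x" using fail False u by force
    moreover have "g u \<le> d" if "card A < K"
      using False u that \<open>g u < g x\<close> by force
    ultimately show thesis
      using exchange_optimal_swap_out_worst[OF \<open>finite A\<close> assms(4) u(1) opt u(2)] that u(1)
      unfolding d_def by blast
  qed
qed

lemma net_value_diff_mono:
  fixes g g' :: "'a \<Rightarrow> real"
  assumes "finite A" "finite X"
    and "\<And>w. w \<in> X - A \<Longrightarrow> g w \<le> g' w" and "\<And>w. w \<in> A - X \<Longrightarrow> g' w \<le> g w"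
  shows "net_value g D X - net_value g D A \<le> net_value g' D X - net_value g' D A"
proof -
  have split: "sum h X - sum h A = sum h (X - A) - sum h (A - X)" for h :: "'a \<Rightarrow> real"
    using sum.Int_Diff[OF assms(2), of h A] sum.Int_Diff[OF assms(1), of h X]
    by (simp add: Int_commute)
  have "sum g (X - A) \<le> sum g' (X - A)" "sum g' (A - X) \<le> sum g (A - X)"
    using assms(3,4) by (auto intro: sum_mono)
  with split[of g] split[of g'] show ?thesis unfolding net_value_def by linarith
qed

lemma net_value_diff_cong:
  fixes g g' :: "'a \<Rightarrow> real"
  assumes "finite A" "finite X" and "\<And>w. w \<in> X - A \<Longrightarrow> g w = g' w" "\<And>w. w \<in> A - X \<Longrightarrow> g w = g' w"
  shows "net_value g D X - net_value g D A = net_value g' D X - net_value g' D A"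
  using net_value_diff_mono[OF assms(1,2), of g g' D] net_value_diff_mono[OF assms(1,2), of g' g D]
    assms(3,4)
  by force

section \<open>Payoffs, potentials and improvement paths\<close>

lemma sum_fun_upd_in:
  fixes g :: "'a \<Rightarrow> 'b::ab_group_add"
  assumes "finite S" "x \<in> S"
  shows "sum (g(x := y)) S = sum g S - g x + y"
  using sum.remove[OF assms, of "g(x := y)"] sum.remove[OF assms, of g] by simp

lemma potential_induct [case_names ascent]:
  fixes f :: "'a::finite \<Rightarrow> real"
  assumes "\<And>s. (\<And>t. f s < f t \<Longrightarrow> P t) \<Longrightarrow> P s"
  shows "P s"
proof (induction "card {t. f s < f t}" arbitrary: s rule: less_induct)
  case less
  show ?case
  proof (rule assms)
    fix t assume "f s < f t"
    then have "{t'. f t < f t'} \<subset> {t'. f s < f t'}" by auto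
    then have "card {t'. f t < f t'} < card {t'. f s < f t'}" by (rule psubset_card_mono[OF finite])
    then show "P t" by (rule less.hyps)
  qed
qed

type_synonym ('i, 'w) profile = "'i \<Rightarrow> 'w set \<Rightarrow> 'w set"

locale search_game_setting =
  fixes \<Pi> :: "'i::finite \<Rightarrow> 'w::finite set set"
    and \<mu> :: "'w \<Rightarrow> real" and K :: "'i \<Rightarrow> nat" and c :: "'i \<Rightarrow> nat \<Rightarrow> real"
    and v :: "'i \<Rightarrow> nat \<Rightarrow> 'w \<Rightarrow> real" and vs :: "'w \<Rightarrow> real"
  assumes game: "search_game \<Pi> \<mu> K c v vs"
begin

lemma unique_cell: "\<exists>!C. C \<in> \<Pi> i \<and> w \<in> C"
proof -
  have "is_partition UNIV (\<Pi> i)" using game unfolding search_game_def by blast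
  then show ?thesis unfolding is_partition_def by blast
qed

lemma cell_mem: "cell (\<Pi> i) w \<in> \<Pi> i" "w \<in> cell (\<Pi> i) w"
  using theI'[OF unique_cell] unfolding cell_def by blast+

lemma cell_eq: "C \<in> \<Pi> i \<Longrightarrow> w \<in> C \<Longrightarrow> cell (\<Pi> i) w = C"
  unfolding cell_def by (intro the1_equality unique_cell) auto

lemma sum_over_cells:
  fixes f :: "'w \<Rightarrow> real"
  shows "(\<Sum>w\<in>UNIV. f w) = (\<Sum>C\<in>\<Pi> i. \<Sum>w\<in>C. f w)"
proof -
  have "\<Union>(\<Pi> i) = UNIV" using cell_mem by blast
  moreover have "sum f (\<Union>(\<Pi> i)) = (\<Sum>C\<in>\<Pi> i. sum f C)"
    using sum.Union_disjoint[of "\<Pi> i" f] by (auto dest: cell_eq)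
  ultimately show ?thesis by simp
qed

lemma mu_nonneg: "0 \<le> \<mu> w"
  using game unfolding search_game_def by blast

text \<open>The clamp to \<open>1..n\<close> only makes \<open>prize\<close> antitone in \<open>m\<close> everywhere; it is inactive at
  the searcher counts that occur.\<close>

definition prize :: "'i \<Rightarrow> 'w \<Rightarrow> nat \<Rightarrow> real" where
  "prize i w m = \<mu> w * v i (max 1 (min m (card (UNIV :: 'i set)))) w"

definition cell_cost :: "'i \<Rightarrow> 'w set \<Rightarrow> nat \<Rightarrow> real" where
  "cell_cost i C k = (\<Sum>w\<in>C. \<mu> w) * c i k"

definition others :: "('i, 'w) profile \<Rightarrow> 'i \<Rightarrow> 'w \<Rightarrow> nat" where
  "others s i w = card {j. j \<noteq> i \<and> w \<in> s j (cell (\<Pi> j) w)}"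

definition reward :: "('i, 'w) profile \<Rightarrow> 'i \<Rightarrow> 'w \<Rightarrow> real" where
  "reward s i w = prize i w (others s i w + 1)"

lemma prize_antimono:
  assumes "m \<le> m'"
  shows "prize i w m' \<le> prize i w m"
proof -
  have "v i b w \<le> v i a w" if "1 \<le> a" "a \<le> b" "b \<le> card (UNIV :: 'i set)" for a b
    using that(2,1,3)
  proof (induction b rule: dec_induct)
    case (step b)
    then have "v i (b + 1) w \<le> v i b w" using game unfolding search_game_def by auto
    with step show ?case by simp
  qed simp
  moreover have "1 \<le> card (UNIV :: 'i set)" by (simp add: Suc_le_eq card_gt_0_iff)
  ultimately have "v i (max 1 (min m' (card (UNIV :: 'i set)))) w
      \<le> v i (max 1 (min m (card (UNIV :: 'i set)))) w"
    using assms by simp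
  then show ?thesis unfolding prize_def using mu_nonneg by (simp add: mult_left_mono)
qed

lemma prize_eq: "1 \<le> m \<Longrightarrow> m \<le> card (UNIV :: 'i set) \<Longrightarrow> prize i w m = \<mu> w * v i m w"
  unfolding prize_def by simp

lemma discrete_convex_cell_cost: "discrete_convex (K i) (cell_cost i C)"
proof -
  have "0 \<le> (\<Sum>w\<in>C. \<mu> w)" using mu_nonneg by (simp add: sum_nonneg)
  moreover have "c i k - c i (k - 1) \<le> c i (k + 1) - c i k" if "1 \<le> k" "k + 1 \<le> K i" for k
    using game that unfolding search_game_def by blast
  ultimately show ?thesis
    unfolding discrete_convex_def cell_cost_def
    by (auto simp: right_diff_distrib[symmetric] intro: mult_left_mono)
qed

lemma others_less_card: "others s i w < card (UNIV :: 'i set)"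
proof -
  have "{j. j \<noteq> i \<and> w \<in> s j (cell (\<Pi> j) w)} \<subset> UNIV" by blast
  then show ?thesis unfolding others_def by (rule psubset_card_mono[OF finite_UNIV])
qed

lemma searchers_fun_upd:
  "searchers \<Pi> (s(i := \<sigma>)) w = others s i w + (if w \<in> \<sigma> (cell (\<Pi> i) w) then 1 else 0)"
proof -
  define S where "S = {j. j \<noteq> i \<and> w \<in> s j (cell (\<Pi> j) w)}"
  have "{j. w \<in> (s(i := \<sigma>)) j (cell (\<Pi> j) w)} = (if w \<in> \<sigma> (cell (\<Pi> i) w) then insert i S else S)"
    unfolding S_def by auto
  then show ?thesis unfolding searchers_def others_def S_def[symmetric] by (simp add: S_def)
qed

lemma searchers_cell:
  "C \<in> \<Pi> i \<Longrightarrow> w \<in> C \<Longrightarrow> searchers \<Pi> s w = others s i w + (if w \<in> s i C then 1 else 0)"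
  using searchers_fun_upd[of s i "s i" w] by (simp add: cell_eq)

definition strategy_value :: "('w \<Rightarrow> real) \<Rightarrow> 'i \<Rightarrow> ('w set \<Rightarrow> 'w set) \<Rightarrow> real" where
  "strategy_value g i \<sigma> = (\<Sum>C\<in>\<Pi> i. net_value g (cell_cost i C) (\<sigma> C))"

lemma payoff_fun_upd:
  assumes "\<And>C. C \<in> \<Pi> i \<Longrightarrow> \<sigma> C \<subseteq> C"
  shows "payoff \<Pi> \<mu> c v (s(i := \<sigma>)) i = strategy_value (reward s i) i \<sigma>"
proof -
  have at: "\<mu> w * payoff_at \<Pi> c v (s(i := \<sigma>)) i w
      = (if w \<in> \<sigma> C then reward s i w else 0) - \<mu> w * c i (card (\<sigma> C))"
    if "C \<in> \<Pi> i" "w \<in> C" for C w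
    using that others_less_card[of s i w]
    by (simp add: payoff_at_def cell_eq searchers_fun_upd reward_def prize_eq right_diff_distrib)
  have "payoff \<Pi> \<mu> c v (s(i := \<sigma>)) i
      = (\<Sum>C\<in>\<Pi> i. \<Sum>w\<in>C. (if w \<in> \<sigma> C then reward s i w else 0) - \<mu> w * c i (card (\<sigma> C)))"
    unfolding payoff_def sum_over_cells[of _ i] by (intro sum.cong refl) (simp add: at)
  also have "\<dots> = strategy_value (reward s i) i \<sigma>"
    unfolding strategy_value_def net_value_def cell_cost_def
  proof (intro sum.cong refl)
    fix C assume "C \<in> \<Pi> i"
    then have "C \<inter> \<sigma> C = \<sigma> C" using assms by blast
    then show "(\<Sum>w\<in>C. (if w \<in> \<sigma> C then reward s i w else 0) - \<mu> w * c i (card (\<sigma> C)))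
        = sum (reward s i) (\<sigma> C) - (\<Sum>w\<in>C. \<mu> w) * c i (card (\<sigma> C))"
      by (simp add: sum_subtractf sum.inter_restrict[symmetric] sum_distrib_right)
  qed
  finally show ?thesis .
qed

lemma profile_cell: "s \<in> profiles \<Pi> K \<Longrightarrow> C \<in> \<Pi> i \<Longrightarrow> s i C \<subseteq> C \<and> card (s i C) \<le> K i"
  unfolding profiles_def strategies_def by blast

lemma payoff_eq_strategy_value:
  "s \<in> profiles \<Pi> K \<Longrightarrow> payoff \<Pi> \<mu> c v s i = strategy_value (reward s i) i (s i)"
  using payoff_fun_upd[of i "s i" s] profile_cell by simp

lemma strategy_value_fun_upd:
  assumes "C \<in> \<Pi> i"
  shows "strategy_value g i (\<sigma>(C := X))
    = strategy_value g i \<sigma> - net_value g (cell_cost i C) (\<sigma> C) + net_value g (cell_cost i C) X"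
proof -
  have eq: "(\<lambda>C'. net_value g (cell_cost i C') ((\<sigma>(C := X)) C'))
      = (\<lambda>C'. net_value g (cell_cost i C') (\<sigma> C'))(C := net_value g (cell_cost i C) X)"
    by auto
  show ?thesis unfolding strategy_value_def eq sum_fun_upd_in[OF finite assms] by simp
qed

definition update :: "('i, 'w) profile \<Rightarrow> 'i \<Rightarrow> 'w set \<Rightarrow> 'w set \<Rightarrow> ('i, 'w) profile" where
  "update s i C X = s(i := (s i)(C := X))"

lemma update_in_profiles:
  "s \<in> profiles \<Pi> K \<Longrightarrow> C \<in> \<Pi> i \<Longrightarrow> X \<subseteq> C \<Longrightarrow> card X \<le> K i \<Longrightarrow> update s i C X \<in> profiles \<Pi> K"
  unfolding profiles_def strategies_def update_def by auto

lemma payoff_update: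
  assumes "s \<in> profiles \<Pi> K" "C \<in> \<Pi> i" "X \<subseteq> C"
  shows "payoff \<Pi> \<mu> c v (update s i C X) i = payoff \<Pi> \<mu> c v s i
    - net_value (reward s i) (cell_cost i C) (s i C) + net_value (reward s i) (cell_cost i C) X"
proof -
  have "payoff \<Pi> \<mu> c v (update s i C X) i = strategy_value (reward s i) i ((s i)(C := X))"
    unfolding update_def by (rule payoff_fun_upd) (use assms profile_cell in auto)
  then show ?thesis
    unfolding payoff_eq_strategy_value[OF assms(1)] strategy_value_fun_upd[OF assms(2)] .
qed

definition improvement_step :: "('i, 'w) profile \<Rightarrow> ('i, 'w) profile \<Rightarrow> bool" where
  "improvement_step s s' \<longleftrightarrow>
     (\<exists>i. (\<forall>j. j \<noteq> i \<longrightarrow> s' j = s j) \<and> payoff \<Pi> \<mu> c v s i < payoff \<Pi> \<mu> c v s' i)"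

lemma improvement_step_update:
  assumes "s \<in> profiles \<Pi> K" "C \<in> \<Pi> i" "X \<subseteq> C"
    and "net_value (reward s i) (cell_cost i C) (s i C) < net_value (reward s i) (cell_cost i C) X"
  shows "improvement_step s (update s i C X)"
  unfolding improvement_step_def using payoff_update[OF assms(1-3)] assms(4)
  by (intro exI[of _ i]) (auto simp: update_def)

definition potential :: "('i \<Rightarrow> 'w \<Rightarrow> real) \<Rightarrow> ('i, 'w) profile \<Rightarrow> real" where
  "potential f s = (\<Sum>j\<in>UNIV. strategy_value (f j) j (s j))"

lemma potential_update:
  assumes "C \<in> \<Pi> i"
  shows "potential f (update s i C X)
    = potential f s - net_value (f i) (cell_cost i C) (s i C) + net_value (f i) (cell_cost i C) X"
proof -
  have eq: "(\<lambda>j. strategy_value (f j) j (update s i C X j))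
      = (\<lambda>j. strategy_value (f j) j (s j))(i := strategy_value (f i) i ((s i)(C := X)))"
    unfolding update_def by auto
  show ?thesis
    unfolding potential_def eq sum_fun_upd_in[OF finite UNIV_I] strategy_value_fun_upd[OF assms]
    by simp
qed

lemma improvement_path_iff:
  "improvement_path \<Pi> \<mu> K c v ps \<longleftrightarrow> ps \<noteq> [] \<and> set ps \<subseteq> profiles \<Pi> K \<and>
     (\<forall>t. t + 1 < length ps \<longrightarrow> improvement_step (ps ! t) (ps ! (t + 1)))"
  unfolding improvement_path_def improvement_step_def by blast

lemma improvement_path_Cons:
  assumes "improvement_path \<Pi> \<mu> K c v ps" "s \<in> profiles \<Pi> K" "improvement_step s (hd ps)"
  shows "improvement_path \<Pi> \<mu> K c v (s # ps)"
  unfolding improvement_path_iff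
proof (intro conjI allI impI)
  show "set (s # ps) \<subseteq> profiles \<Pi> K" using assms(1,2) unfolding improvement_path_iff by simp
next
  fix t assume "t + 1 < length (s # ps)"
  then show "improvement_step ((s # ps) ! t) ((s # ps) ! (t + 1))"
    using assms(1,3) unfolding improvement_path_iff by (cases t) (auto simp: hd_conv_nth)
qed simp

lemma improvement_path_ConsD:
  assumes "improvement_path \<Pi> \<mu> K c v (s # ps)" "ps \<noteq> []"
  shows "improvement_path \<Pi> \<mu> K c v ps" "s \<in> profiles \<Pi> K" "improvement_step s (hd ps)"
proof -
  note path = assms(1)[unfolded improvement_path_iff]
  show "improvement_path \<Pi> \<mu> K c v ps"
    unfolding improvement_path_iff using path assms(2) by force
  show "s \<in> profiles \<Pi> K" using path by simp
  show "improvement_step s (hd ps)" using path assms(2) by (force simp: hd_conv_nth)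
qed

definition reaches :: "(('i, 'w) profile \<Rightarrow> bool) \<Rightarrow> ('i, 'w) profile \<Rightarrow> bool" where
  "reaches P s \<longleftrightarrow> (\<exists>ps. improvement_path \<Pi> \<mu> K c v ps \<and> hd ps = s \<and> P (last ps))"

lemma reaches_refl: "s \<in> profiles \<Pi> K \<Longrightarrow> P s \<Longrightarrow> reaches P s"
  unfolding reaches_def improvement_path_iff by (intro exI[of _ "[s]"]) simp

lemma reaches_step:
  assumes "s \<in> profiles \<Pi> K" "improvement_step s s'" "reaches P s'"
  shows "reaches P s"
proof -
  obtain ps where "improvement_path \<Pi> \<mu> K c v ps" "hd ps = s'" "P (last ps)"
    using assms(3) unfolding reaches_def by blast
  moreover from this(1) have "ps \<noteq> []" unfolding improvement_path_iff by simp
  ultimately show ?thesis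
    using improvement_path_Cons assms(1,2) unfolding reaches_def by (intro exI[of _ "s # ps"]) auto
qed

lemma reaches_trans:
  assumes "reaches P s" and "\<And>t. P t \<Longrightarrow> reaches Q t"
  shows "reaches Q s"
proof -
  obtain ps where "improvement_path \<Pi> \<mu> K c v ps" "hd ps = s" "P (last ps)"
    using assms(1) unfolding reaches_def by blast
  then show ?thesis
  proof (induction ps arbitrary: s)
    case Nil
    then show ?case unfolding improvement_path_iff by simp
  next
    case (Cons t ps)
    show ?case
    proof (cases "ps = []")
      case True
      with Cons.prems assms(2) show ?thesis by simp
    next
      case False
      with Cons.prems improvement_path_ConsD[OF Cons.prems(1) False] Cons.IH[of "hd ps"]
      show ?thesis by (auto intro: reaches_step)
    qed
  qed
qed

section \<open>Equilibria relative to frozen searches\<close>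

definition frozen_part :: "('i \<times> 'w) set \<Rightarrow> 'i \<Rightarrow> 'w set \<Rightarrow> 'w set" where
  "frozen_part Fz i C = {w \<in> C. (i, w) \<in> Fz}"

definition keeps_frozen :: "('i \<times> 'w) set \<Rightarrow> ('i, 'w) profile \<Rightarrow> bool" where
  "keeps_frozen Fz s \<longleftrightarrow> (\<forall>(i, w)\<in>Fz. w \<in> s i (cell (\<Pi> i) w))"

definition constrained_equilibrium :: "('i \<times> 'w) set \<Rightarrow> ('i, 'w) profile \<Rightarrow> bool" where
  "constrained_equilibrium Fz s \<longleftrightarrow> s \<in> profiles \<Pi> K \<and> keeps_frozen Fz s \<and>
     (\<forall>i. \<forall>C\<in>\<Pi> i. exchange_optimal (reward s i) (cell_cost i C) (K i) C (frozen_part Fz i C) (s i C))"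

text \<open>Every choice is exchange optimal against the prizes it would earn if exactly \<open>R w\<close>
  players searched each location \<open>w\<close> (one more at a location its player joins).\<close>

definition stable_at_load :: "('i \<times> 'w) set \<Rightarrow> ('w \<Rightarrow> nat) \<Rightarrow> ('i, 'w) profile \<Rightarrow> bool" where
  "stable_at_load Fz R s \<longleftrightarrow> (\<forall>i. \<forall>C\<in>\<Pi> i.
     exchange_optimal (\<lambda>w. prize i w (R w + (if w \<in> s i C then 0 else 1)))
       (cell_cost i C) (K i) C (frozen_part Fz i C) (s i C))"

lemma frozen_part_subset: "keeps_frozen Fz s \<Longrightarrow> C \<in> \<Pi> i \<Longrightarrow> frozen_part Fz i C \<subseteq> s i C"
  unfolding keeps_frozen_def frozen_part_def using cell_eq by fastforce

lemma keeps_frozen_update: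
  assumes "keeps_frozen Fz s" "frozen_part Fz i C \<subseteq> X"
  shows "keeps_frozen Fz (update s i C X)"
  unfolding keeps_frozen_def
proof (intro ballI, clarify)
  fix j w assume "(j, w) \<in> Fz"
  then show "w \<in> update s i C X j (cell (\<Pi> j) w)"
    using assms cell_mem[where i = j and w = w]
    unfolding keeps_frozen_def frozen_part_def update_def by auto
qed

lemma keeps_frozen_subset: "keeps_frozen Fz' s \<Longrightarrow> Fz \<subseteq> Fz' \<Longrightarrow> keeps_frozen Fz s"
  unfolding keeps_frozen_def by blast

lemma reward_eq: "reward s i = (\<lambda>w. prize i w (others s i w + 1))"
  unfolding reward_def ..

lemma others_update: "others (update s i C X) i = others s i"
  unfolding others_def update_def by (intro ext arg_cong[where f = card]) auto

lemma searchers_update: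
  assumes "C \<in> \<Pi> i" "s i C \<subseteq> C" "X \<subseteq> C"
  shows "searchers \<Pi> (update s i C X) w + (if w \<in> s i C then 1 else 0)
    = searchers \<Pi> s w + (if w \<in> X then 1 else 0)"
proof (cases "w \<in> C")
  case True
  then show ?thesis
    using searchers_cell[OF assms(1) True, of s] searchers_cell[OF assms(1) True, of "update s i C X"]
    by (simp add: others_update) (simp add: update_def)
next
  case False
  then have "cell (\<Pi> i) w \<noteq> C" using cell_mem by metis
  with False assms(2,3) show ?thesis
    using searchers_fun_upd[of s i "(s i)(C := X)" w] searchers_fun_upd[of s i "s i" w]
    unfolding update_def by auto
qed

lemma exchange_optimal_prize_mono:
  assumes "exchange_optimal (\<lambda>w. prize i w (L w)) D k C F A"
    and "\<And>w. w \<in> A - F \<Longrightarrow> L' w \<le> L w" and "\<And>w. w \<in> C - A \<Longrightarrow> L w \<le> L' w"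
  shows "exchange_optimal (\<lambda>w. prize i w (L' w)) D k C F A"
  using assms(1) by (rule exchange_optimal_mono) (simp_all add: assms(2,3) prize_antimono)

lemma constrained_equilibrium_iff_stable:
  "constrained_equilibrium Fz s \<longleftrightarrow>
     s \<in> profiles \<Pi> K \<and> keeps_frozen Fz s \<and> stable_at_load Fz (searchers \<Pi> s) s"
proof -
  have "exchange_optimal (reward s i) (cell_cost i C) (K i) C (frozen_part Fz i C) (s i C)
    \<longleftrightarrow> exchange_optimal (\<lambda>w. prize i w (searchers \<Pi> s w + (if w \<in> s i C then 0 else 1)))
          (cell_cost i C) (K i) C (frozen_part Fz i C) (s i C)"
    if "s \<in> profiles \<Pi> K" "C \<in> \<Pi> i" for i C
    using that profile_cell by (intro exchange_optimal_cong) (auto simp: searchers_cell reward_def)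
  then show ?thesis unfolding constrained_equilibrium_def stable_at_load_def by blast
qed

lemma stable_at_load_update:
  assumes "stable_at_load Fz' R s" "C \<in> \<Pi> i"
    and agree: "\<And>j w. j \<noteq> i \<or> w \<notin> C \<Longrightarrow> (j, w) \<in> Fz' \<longleftrightarrow> (j, w) \<in> Fz"
    and "exchange_optimal (\<lambda>w. prize i w (R w + (if w \<in> X then 0 else 1)))
      (cell_cost i C) (K i) C (frozen_part Fz i C) X"
  shows "stable_at_load Fz R (update s i C X)"
  unfolding stable_at_load_def
proof (intro allI ballI)
  fix j C' assume C': "C' \<in> \<Pi> j"
  show "exchange_optimal (\<lambda>w. prize j w (R w + (if w \<in> update s i C X j C' then 0 else 1)))
    (cell_cost j C') (K j) C' (frozen_part Fz j C') (update s i C X j C')"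
  proof (cases "j = i \<and> C' = C")
    case True
    then show ?thesis using assms(4) by (simp add: update_def)
  next
    case False
    have "frozen_part Fz' j C' = frozen_part Fz j C'"
      unfolding frozen_part_def
    proof (intro Collect_cong conj_cong refl)
      fix w assume "w \<in> C'"
      then have "j \<noteq> i \<or> w \<notin> C" using False C' assms(2) cell_eq by metis
      then show "(j, w) \<in> Fz' \<longleftrightarrow> (j, w) \<in> Fz" by (rule agree)
    qed
    moreover have "update s i C X j C' = s j C'" using False by (auto simp: update_def)
    moreover have "exchange_optimal (\<lambda>w. prize j w (R w + (if w \<in> s j C' then 0 else 1)))
      (cell_cost j C') (K j) C' (frozen_part Fz' j C') (s j C')"
      using assms(1) C' unfolding stable_at_load_def by blast
    ultimately show ?thesis by simp
  qed
qed

lemma improving_update: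
  assumes "s \<in> profiles \<Pi> K" "keeps_frozen Fz s" "C \<in> \<Pi> i"
    and "X \<subseteq> C" "card X \<le> K i" "frozen_part Fz i C \<subseteq> X"
    and "net_value (reward s i) (cell_cost i C) (s i C) < net_value (reward s i) (cell_cost i C) X"
  shows "update s i C X \<in> profiles \<Pi> K" "keeps_frozen Fz (update s i C X)"
    and "improvement_step s (update s i C X)"
  using update_in_profiles[OF assms(1,3-5)] keeps_frozen_update[OF assms(2,6)]
    improvement_step_update[OF assms(1,3,4,7)] .

lemma potential_update_less:
  assumes "C \<in> \<Pi> i" "net_value (f i) (cell_cost i C) (s i C) < net_value (f i) (cell_cost i C) X"
  shows "potential f s < potential f (update s i C X)"
  using potential_update[OF assms(1)] assms(2) by simp

section \<open>Repairing a missing or surplus searcher\<close>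

lemma stable_improving_update:
  assumes "s \<in> profiles \<Pi> K" "keeps_frozen Fz s" "stable_at_load Fz' R s" "C \<in> \<Pi> i"
    and "\<And>j w. j \<noteq> i \<or> w \<notin> C \<Longrightarrow> (j, w) \<in> Fz' \<longleftrightarrow> (j, w) \<in> Fz"
    and "X \<subseteq> C" "card X \<le> K i" "frozen_part Fz i C \<subseteq> X"
    and "net_value (reward s i) (cell_cost i C) (s i C) < net_value (reward s i) (cell_cost i C) X"
    and "exchange_optimal (\<lambda>w. prize i w (R w + (if w \<in> X then 0 else 1)))
      (cell_cost i C) (K i) C (frozen_part Fz i C) X"
  shows "improvement_step s (update s i C X)" "update s i C X \<in> profiles \<Pi> K"
    "keeps_frozen Fz (update s i C X)" "stable_at_load Fz R (update s i C X)"
  using improving_update[OF assms(1,2,4,6-9)] stable_at_load_update[OF assms(3,4,5,10)] by blast+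

lemma reward_optimal_off_deficit:
  assumes "s \<in> profiles \<Pi> K" "stable_at_load Fz R s" "C \<in> \<Pi> i"
    and load: "\<And>w. searchers \<Pi> s w + (if w = x then 1 else 0) = R w"
  shows "exchange_optimal (reward s i) (cell_cost i C) (K i) (C - ({x} - s i C))
    (frozen_part Fz i C) (s i C)"
proof -
  have "exchange_optimal (\<lambda>w. prize i w (R w + (if w \<in> s i C then 0 else 1)))
    (cell_cost i C) (K i) C (frozen_part Fz i C) (s i C)"
    using assms(2,3) unfolding stable_at_load_def by blast
  then have "exchange_optimal (\<lambda>w. prize i w (R w + (if w \<in> s i C then 0 else 1)))
    (cell_cost i C) (K i) (C - ({x} - s i C)) (frozen_part Fz i C) (s i C)"
    by (rule exchange_optimal_subset) blast
  then show ?thesis unfolding reward_eq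
  proof (rule exchange_optimal_prize_mono)
    fix w assume "w \<in> s i C - frozen_part Fz i C"
    then show "others s i w + 1 \<le> R w + (if w \<in> s i C then 0 else 1)"
      using load[of w] searchers_cell[OF assms(3), of w s] profile_cell[OF assms(1,3)] by auto
  next
    fix w assume "w \<in> C - ({x} - s i C) - s i C"
    then show "R w + (if w \<in> s i C then 0 else 1) \<le> others s i w + 1"
      using load[of w] searchers_cell[OF assms(3), of w s] by (cases "w = x") auto
  qed
qed

lemma deficit_cell_move:
  assumes prof: "s \<in> profiles \<Pi> K" and keeps: "keeps_frozen Fz s"
    and stable: "stable_at_load Fz R s" and C: "C \<in> \<Pi> i"
    and load: "\<And>w. searchers \<Pi> s w + (if w = x then 1 else 0) = R w"
    and not_opt: "\<not> exchange_optimal (reward s i) (cell_cost i C) (K i) C (frozen_part Fz i C) (s i C)"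
  obtains A' where "A' = insert x (s i C) \<or> (\<exists>u\<in>s i C. A' = insert x (s i C - {u}))"
    and "x \<notin> s i C" "A' \<subseteq> C" "card A' \<le> K i" "frozen_part Fz i C \<subseteq> A'"
    and "net_value (reward s i) (cell_cost i C) (s i C) < net_value (reward s i) (cell_cost i C) A'"
    and "net_value (\<lambda>w. prize i w (R w)) (cell_cost i C) (s i C)
      < net_value (\<lambda>w. prize i w (R w)) (cell_cost i C) A'"
    and "exchange_optimal (\<lambda>w. prize i w (R w + (if w \<in> A' then 0 else 1)))
      (cell_cost i C) (K i) C (frozen_part Fz i C) A'"
proof -
  define A F where "A = s i C" and "F = frozen_part Fz i C"
  have A: "A \<subseteq> C" "card A \<le> K i" "F \<subseteq> A" "finite A"
    using profile_cell[OF prof C] frozen_part_subset[OF keeps C] unfolding A_def F_def by auto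
  note off = reward_optimal_off_deficit[OF prof stable C load, folded A_def F_def]
  have x: "x \<in> C - A"
  proof (rule ccontr)
    assume "x \<notin> C - A"
    then have "C - ({x} - A) = C" by blast
    with off not_opt show False unfolding A_def F_def by simp
  qed
  then have off_x: "C - ({x} - A) = C - {x}" by blast
  have seen: "others s i w \<le> R w \<and> R w \<le> others s i w + 1" if "w \<in> C" for w
    using load[of w] searchers_cell[OF C that, of s] x unfolding A_def by (auto split: if_splits)
  \<comment> \<open>where the choice changes, rewards are the prizes at load \<open>R\<close>: payoff gain = potential gain\<close>
  have exact: "R w = others s i w + 1" if "w \<in> insert x A" for w
  proof -
    have "w \<in> C" using that x A(1) by auto
    then show ?thesis using that load[of w] searchers_cell[OF C, of w s] x unfolding A_def
      by (cases "w = x") auto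
  qed
  obtain A' where shape: "(A' = insert x A \<and> card A < K i) \<or> (\<exists>u\<in>A - F. A' = insert x (A - {u}))"
    and better: "net_value (reward s i) (cell_cost i C) A < net_value (reward s i) (cell_cost i C) A'"
    and opt: "exchange_optimal (reward s i) (cell_cost i C) (K i) C F A'"
    using exchange_optimal_extend[OF finite A(1) discrete_convex_cell_cost x off[unfolded off_x]] not_opt
    unfolding A_def F_def by blast
  have "card (insert x (A - {u})) = card A" if "u \<in> A" for u
    using that x A(4) card_Diff1_less[OF A(4) that] by simp
  then have A': "A' \<subseteq> insert x A" "A' \<subseteq> C" "F \<subseteq> A'" "card A' \<le> K i"
    using shape A x by auto
  have "net_value (\<lambda>w. prize i w (R w)) (cell_cost i C) A'
      - net_value (\<lambda>w. prize i w (R w)) (cell_cost i C) A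
    = net_value (reward s i) (cell_cost i C) A' - net_value (reward s i) (cell_cost i C) A"
    by (rule net_value_diff_cong) (use A(4) A'(1) exact in \<open>auto simp: reward_def\<close>)
  moreover have "exchange_optimal (\<lambda>w. prize i w (R w + (if w \<in> A' then 0 else 1)))
      (cell_cost i C) (K i) C F A'"
    using opt unfolding reward_eq by (rule exchange_optimal_prize_mono) (use seen A' in auto)
  ultimately show thesis
    using that[of A'] shape x A' better unfolding A_def F_def by auto
qed

lemma deficit_step:
  assumes prof: "s \<in> profiles \<Pi> K" and keeps: "keeps_frozen Fz s"
    and stable: "stable_at_load Fz R s"
    and load: "\<And>w. searchers \<Pi> s w + (if w = x then 1 else 0) = R w"
    and not_eq: "\<not> constrained_equilibrium Fz s"
  obtains s' where "improvement_step s s'" "s' \<in> profiles \<Pi> K" "keeps_frozen Fz s'"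
    "stable_at_load Fz R s'"
    "potential (\<lambda>i w. prize i w (R w)) s < potential (\<lambda>i w. prize i w (R w)) s'"
    "(\<forall>w. searchers \<Pi> s' w = R w) \<or> (\<exists>u. \<forall>w. searchers \<Pi> s' w + (if w = u then 1 else 0) = R w)"
proof -
  obtain i C where C: "C \<in> \<Pi> i"
    and not_opt: "\<not> exchange_optimal (reward s i) (cell_cost i C) (K i) C (frozen_part Fz i C) (s i C)"
    using prof keeps not_eq unfolding constrained_equilibrium_def by blast
  obtain A' where shape: "A' = insert x (s i C) \<or> (\<exists>u\<in>s i C. A' = insert x (s i C - {u}))"
    and A': "x \<notin> s i C" "A' \<subseteq> C" "card A' \<le> K i" "frozen_part Fz i C \<subseteq> A'"
    and better: "net_value (reward s i) (cell_cost i C) (s i C)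
      < net_value (reward s i) (cell_cost i C) A'"
    and up: "net_value (\<lambda>w. prize i w (R w)) (cell_cost i C) (s i C)
      < net_value (\<lambda>w. prize i w (R w)) (cell_cost i C) A'"
    and opt: "exchange_optimal (\<lambda>w. prize i w (R w + (if w \<in> A' then 0 else 1)))
      (cell_cost i C) (K i) C (frozen_part Fz i C) A'"
    using deficit_cell_move[OF prof keeps stable C load not_opt] by blast
  define s' where "s' = update s i C A'"
  have s': "improvement_step s s'" "s' \<in> profiles \<Pi> K" "keeps_frozen Fz s'" "stable_at_load Fz R s'"
    using stable_improving_update[OF prof keeps stable C _ A'(2-4) better opt] unfolding s'_def by simp_all
  have loads: "searchers \<Pi> s' w + (if w \<in> s i C then 1 else 0)
      = searchers \<Pi> s w + (if w \<in> A' then 1 else 0)" for w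
    using searchers_update[OF C _ A'(2), of s w] profile_cell[OF prof C] unfolding s'_def by simp
  have "(\<forall>w. searchers \<Pi> s' w = R w) \<or> (\<exists>u. \<forall>w. searchers \<Pi> s' w + (if w = u then 1 else 0) = R w)"
    using shape
  proof
    assume "A' = insert x (s i C)"
    then have "searchers \<Pi> s' w = R w" for w
      using loads[of w] load[of w] A'(1) by (cases "w = x"; cases "w \<in> s i C") auto
    then show ?thesis by blast
  next
    assume "\<exists>u\<in>s i C. A' = insert x (s i C - {u})"
    then obtain u where "u \<in> s i C" "A' = insert x (s i C - {u})" by blast
    then have "searchers \<Pi> s' w + (if w = u then 1 else 0) = R w" for w
      using loads[of w] load[of w] A'(1) by (cases "w = u"; cases "w = x"; cases "w \<in> s i C") auto
    then show ?thesis by blast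
  qed
  with s' potential_update_less[where f = "\<lambda>i w. prize i w (R w)" and s = s, OF C up] show thesis
    using that unfolding s'_def by blast
qed

lemma reaches_from_deficit:
  assumes "s \<in> profiles \<Pi> K" "keeps_frozen Fz s" "stable_at_load Fz R s"
    and "\<And>w. searchers \<Pi> s w + (if w = x then 1 else 0) = R w"
  shows "reaches (constrained_equilibrium Fz) s"
  using assms
proof (induction s arbitrary: x rule: potential_induct[where f = "potential (\<lambda>i w. prize i w (R w))"])
  case (ascent s)
  show ?case
  proof (cases "constrained_equilibrium Fz s")
    case True
    with ascent.prems(1) show ?thesis by (rule reaches_refl)
  next
    case False
    obtain s' where s': "improvement_step s s'" "s' \<in> profiles \<Pi> K" "keeps_frozen Fz s'"
      "stable_at_load Fz R s'"
      and up: "potential (\<lambda>i w. prize i w (R w)) s < potential (\<lambda>i w. prize i w (R w)) s'"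
      and loads: "(\<forall>w. searchers \<Pi> s' w = R w) \<or>
        (\<exists>u. \<forall>w. searchers \<Pi> s' w + (if w = u then 1 else 0) = R w)"
      using deficit_step[OF ascent.prems False] by blast
    from loads have "reaches (constrained_equilibrium Fz) s'"
    proof
      assume "\<forall>w. searchers \<Pi> s' w = R w"
      then have "R = searchers \<Pi> s'" by auto
      with s'(2-4) show ?thesis
        by (intro reaches_refl) (simp_all add: constrained_equilibrium_iff_stable)
    next
      assume "\<exists>u. \<forall>w. searchers \<Pi> s' w + (if w = u then 1 else 0) = R w"
      with ascent.IH[OF up s'(2-4)] show ?thesis by blast
    qed
    with ascent.prems(1) s'(1) show ?thesis by (rule reaches_step)
  qed
qed

lemma surplus_in_failing_cell:
  assumes "stable_at_load Fz R s" "C \<in> \<Pi> i"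
    and not_opt: "\<not> exchange_optimal (\<lambda>w. prize i w ((R(z := R z + 1)) w + (if w \<in> s i C then 0 else 1)))
      (cell_cost i C) (K i) C (frozen_part Fz i C) (s i C)"
  shows "z \<in> s i C - frozen_part Fz i C"
    and "exchange_optimal (\<lambda>w. prize i w ((R(z := R z + 1)) w + (if w \<in> s i C then 0 else 1)))
      (cell_cost i C) (K i) C (insert z (frozen_part Fz i C)) (s i C)"
proof -
  have opt: "exchange_optimal (\<lambda>w. prize i w (R w + (if w \<in> s i C then 0 else 1)))
    (cell_cost i C) (K i) C (frozen_part Fz i C) (s i C)"
    using assms(1,2) unfolding stable_at_load_def by blast
  show "z \<in> s i C - frozen_part Fz i C"
  proof (rule ccontr)
    assume "z \<notin> s i C - frozen_part Fz i C"
    have "exchange_optimal (\<lambda>w. prize i w ((R(z := R z + 1)) w + (if w \<in> s i C then 0 else 1)))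
      (cell_cost i C) (K i) C (frozen_part Fz i C) (s i C)"
    proof (rule exchange_optimal_prize_mono[OF opt])
      fix w assume "w \<in> s i C - frozen_part Fz i C"
      with \<open>z \<notin> s i C - frozen_part Fz i C\<close> have "w \<noteq> z" by blast
      then show "(R(z := R z + 1)) w + (if w \<in> s i C then 0 else 1) \<le> R w + (if w \<in> s i C then 0 else 1)"
        by simp
    qed simp
    with not_opt show False ..
  qed
  have "exchange_optimal (\<lambda>w. prize i w (R w + (if w \<in> s i C then 0 else 1)))
    (cell_cost i C) (K i) C (insert z (frozen_part Fz i C)) (s i C)"
    using opt by (rule exchange_optimal_frozen_mono) blast
  then show "exchange_optimal (\<lambda>w. prize i w ((R(z := R z + 1)) w + (if w \<in> s i C then 0 else 1)))
      (cell_cost i C) (K i) C (insert z (frozen_part Fz i C)) (s i C)"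
    by (rule exchange_optimal_prize_mono) auto
qed

lemma surplus_cell_move:
  assumes prof: "s \<in> profiles \<Pi> K" and keeps: "keeps_frozen Fz s"
    and stable: "stable_at_load Fz R s" and C: "C \<in> \<Pi> i" and "x \<noteq> z"
    and load: "\<And>w. searchers \<Pi> s w + (if w = x then 1 else 0) = R w + (if w = z then 1 else 0)"
    and not_opt: "\<not> exchange_optimal (\<lambda>w. prize i w ((R(z := R z + 1)) w + (if w \<in> s i C then 0 else 1)))
      (cell_cost i C) (K i) C (frozen_part Fz i C) (s i C)"
  obtains A' where "A' = s i C - {z} \<or> (\<exists>v\<in>C - s i C. A' = insert v (s i C - {z}))"
    and "z \<in> s i C" "A' \<subseteq> C" "card A' \<le> K i" "frozen_part Fz i C \<subseteq> A'"
    and "net_value (reward s i) (cell_cost i C) (s i C) < net_value (reward s i) (cell_cost i C) A'"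
    and "net_value (\<lambda>w. prize i w (R w + 1)) (cell_cost i C) (s i C)
      < net_value (\<lambda>w. prize i w (R w + 1)) (cell_cost i C) A'"
    and "exchange_optimal (\<lambda>w. prize i w (R w + (if w \<in> A' then 0 else 1)))
      (cell_cost i C) (K i) C (frozen_part Fz i C) A'"
proof -
  define R' A F where "R' = R(z := R z + 1)" and "A = s i C" and "F = frozen_part Fz i C"
  define h where "h = (\<lambda>w. prize i w (R' w + (if w \<in> A then 0 else 1)))"
  have A: "A \<subseteq> C" "card A \<le> K i" "F \<subseteq> A" "finite A"
    using profile_cell[OF prof C] frozen_part_subset[OF keeps C] unfolding A_def F_def by auto
  note z = surplus_in_failing_cell[OF stable C not_opt, folded R'_def A_def F_def h_def]
  obtain A' where shape: "A' = A - {z} \<or> (\<exists>v\<in>C - A. A' = insert v (A - {z}))"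
    and better: "net_value h (cell_cost i C) A < net_value h (cell_cost i C) A'"
    and opt: "exchange_optimal h (cell_cost i C) (K i) C F A'"
    using exchange_optimal_unfreeze[OF finite A(1,2) discrete_convex_cell_cost _ z(2)] z(1) not_opt
    unfolding h_def A_def F_def R'_def by blast
  have "card (insert v (A - {z})) = card A" if "v \<notin> A" for v
    using that z(1) A(4) card_Diff1_less[OF A(4), of z] by simp
  then have A': "A' \<subseteq> C" "F \<subseteq> A'" "card A' \<le> K i" "A - A' = {z}"
    using shape A z(1) card_Diff1_le[of A z] by auto
  have seen: "others s i w \<le> R' w" "w = z \<Longrightarrow> others s i w + 1 = R' w" if "w \<in> C" for w
    using load[of w] searchers_cell[OF C that, of s] z(1) \<open>x \<noteq> z\<close> unfolding R'_def A_def
    by (auto split: if_splits)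
  \<comment> \<open>rewards dominate \<open>h\<close> on added locations and equal it at \<open>z\<close>\<close>
  have "net_value h (cell_cost i C) A' - net_value h (cell_cost i C) A
    \<le> net_value (reward s i) (cell_cost i C) A' - net_value (reward s i) (cell_cost i C) A"
  proof (rule net_value_diff_mono)
    fix w assume "w \<in> A' - A"
    with A'(1) seen(1)[of w] have "others s i w + 1 \<le> R' w + (if w \<in> A then 0 else 1)" by auto
    then show "h w \<le> reward s i w" unfolding h_def reward_def by (rule prize_antimono)
  next
    fix w assume "w \<in> A - A'"
    with A'(4) z(1) A(1) seen(2)[of z] show "reward s i w \<le> h w"
      unfolding h_def reward_def by auto
  qed simp_all
  moreover have "net_value (\<lambda>w. prize i w (R w + 1)) (cell_cost i C) A'
      - net_value (\<lambda>w. prize i w (R w + 1)) (cell_cost i C) A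
    = net_value h (cell_cost i C) A' - net_value h (cell_cost i C) A"
    by (rule net_value_diff_cong) (use A(4) A'(4) z(1) in \<open>auto simp: h_def R'_def\<close>)
  moreover have "exchange_optimal (\<lambda>w. prize i w (R w + (if w \<in> A' then 0 else 1)))
      (cell_cost i C) (K i) C F A'"
    using opt unfolding h_def by (rule exchange_optimal_prize_mono) (use A' in \<open>auto simp: R'_def\<close>)
  ultimately show thesis
    using that[of A'] shape z(1) A' better unfolding A_def F_def by auto
qed

lemma surplus_step:
  assumes prof: "s \<in> profiles \<Pi> K" and keeps: "keeps_frozen Fz s"
    and stable: "stable_at_load Fz R s" and "x \<noteq> z"
    and load: "\<And>w. searchers \<Pi> s w + (if w = x then 1 else 0) = R w + (if w = z then 1 else 0)"
    and not_stable: "\<not> stable_at_load Fz (R(z := R z + 1)) s"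
  obtains s' where "improvement_step s s'" "s' \<in> profiles \<Pi> K" "keeps_frozen Fz s'"
    "stable_at_load Fz R s'"
    "potential (\<lambda>i w. prize i w (R w + 1)) s < potential (\<lambda>i w. prize i w (R w + 1)) s'"
    "(\<forall>w. searchers \<Pi> s' w + (if w = x then 1 else 0) = R w) \<or>
     (\<exists>v. \<forall>w. searchers \<Pi> s' w + (if w = x then 1 else 0) = R w + (if w = v then 1 else 0))"
proof -
  obtain i C where C: "C \<in> \<Pi> i" and not_opt: "\<not> exchange_optimal
      (\<lambda>w. prize i w ((R(z := R z + 1)) w + (if w \<in> s i C then 0 else 1)))
      (cell_cost i C) (K i) C (frozen_part Fz i C) (s i C)"
    using not_stable unfolding stable_at_load_def by blast
  obtain A' where shape: "A' = s i C - {z} \<or> (\<exists>v\<in>C - s i C. A' = insert v (s i C - {z}))"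
    and A': "z \<in> s i C" "A' \<subseteq> C" "card A' \<le> K i" "frozen_part Fz i C \<subseteq> A'"
    and better: "net_value (reward s i) (cell_cost i C) (s i C)
      < net_value (reward s i) (cell_cost i C) A'"
    and up: "net_value (\<lambda>w. prize i w (R w + 1)) (cell_cost i C) (s i C)
      < net_value (\<lambda>w. prize i w (R w + 1)) (cell_cost i C) A'"
    and opt: "exchange_optimal (\<lambda>w. prize i w (R w + (if w \<in> A' then 0 else 1)))
      (cell_cost i C) (K i) C (frozen_part Fz i C) A'"
    using surplus_cell_move[OF prof keeps stable C \<open>x \<noteq> z\<close> load not_opt] by blast
  define s' where "s' = update s i C A'"
  have s': "improvement_step s s'" "s' \<in> profiles \<Pi> K" "keeps_frozen Fz s'" "stable_at_load Fz R s'"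
    using stable_improving_update[OF prof keeps stable C _ A'(2-4) better opt] unfolding s'_def by simp_all
  have loads: "searchers \<Pi> s' w + (if w \<in> s i C then 1 else 0)
      = searchers \<Pi> s w + (if w \<in> A' then 1 else 0)" for w
    using searchers_update[OF C _ A'(2), of s w] profile_cell[OF prof C] unfolding s'_def by simp
  have "(\<forall>w. searchers \<Pi> s' w + (if w = x then 1 else 0) = R w) \<or>
     (\<exists>v. \<forall>w. searchers \<Pi> s' w + (if w = x then 1 else 0) = R w + (if w = v then 1 else 0))"
    using shape
  proof
    assume "A' = s i C - {z}"
    then have "searchers \<Pi> s' w + (if w = x then 1 else 0) = R w" for w
      using loads[of w] load[of w] A'(1) \<open>x \<noteq> z\<close> by (cases "w = z"; cases "w \<in> s i C") auto
    then show ?thesis by blast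
  next
    assume "\<exists>v\<in>C - s i C. A' = insert v (s i C - {z})"
    then obtain v where "v \<notin> s i C" "A' = insert v (s i C - {z})" by blast
    then have "searchers \<Pi> s' w + (if w = x then 1 else 0) = R w + (if w = v then 1 else 0)" for w
      using loads[of w] load[of w] A'(1) \<open>x \<noteq> z\<close>
      by (cases "w = z"; cases "w = v"; cases "w \<in> s i C") auto
    then show ?thesis by blast
  qed
  with s' potential_update_less[where f = "\<lambda>i w. prize i w (R w + 1)" and s = s, OF C up] show thesis
    using that unfolding s'_def by blast
qed

lemma reaches_from_surplus:
  assumes "s \<in> profiles \<Pi> K" "keeps_frozen Fz s" "stable_at_load Fz R s" "x \<noteq> z"
    and "\<And>w. searchers \<Pi> s w + (if w = x then 1 else 0) = R w + (if w = z then 1 else 0)"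
  shows "reaches (constrained_equilibrium Fz) s"
  using assms
proof (induction s arbitrary: z rule: potential_induct[where f = "potential (\<lambda>i w. prize i w (R w + 1))"])
  case (ascent s)
  show ?case
  proof (cases "stable_at_load Fz (R(z := R z + 1)) s")
    case True
    with ascent.prems(1,2) show ?thesis
      by (rule reaches_from_deficit[where x = x]) (use ascent.prems(5) in simp)
  next
    case False
    obtain s' where s': "improvement_step s s'" "s' \<in> profiles \<Pi> K" "keeps_frozen Fz s'"
      "stable_at_load Fz R s'"
      and up: "potential (\<lambda>i w. prize i w (R w + 1)) s < potential (\<lambda>i w. prize i w (R w + 1)) s'"
      and loads: "(\<forall>w. searchers \<Pi> s' w + (if w = x then 1 else 0) = R w) \<or>
        (\<exists>v. \<forall>w. searchers \<Pi> s' w + (if w = x then 1 else 0) = R w + (if w = v then 1 else 0))"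
      using surplus_step[OF ascent.prems False] by blast
    from loads have "reaches (constrained_equilibrium Fz) s'"
    proof
      assume "\<forall>w. searchers \<Pi> s' w + (if w = x then 1 else 0) = R w"
      with s'(2-4) show ?thesis by (intro reaches_from_deficit[where x = x]) auto
    next
      assume "\<exists>v. \<forall>w. searchers \<Pi> s' w + (if w = x then 1 else 0) = R w + (if w = v then 1 else 0)"
      then obtain v where
        v: "\<And>w. searchers \<Pi> s' w + (if w = x then 1 else 0) = R w + (if w = v then 1 else 0)"
        by blast
      show ?thesis
      proof (cases "v = x")
        case True
        with v have "R = searchers \<Pi> s'" by (intro ext) (metis add_right_cancel)
        with s'(2-4) show ?thesis
          by (intro reaches_refl) (simp_all add: constrained_equilibrium_iff_stable)
      next
        case False
        with ascent.IH[OF up s'(2-4)] v show ?thesis by metis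
      qed
    qed
    with ascent.prems(1) s'(1) show ?thesis by (rule reaches_step)
  qed
qed

lemma constrained_equilibrium_unfreezeI:
  assumes eq: "constrained_equilibrium (insert (a, x) Fz) t"
    and opt: "exchange_optimal (reward t a) (cell_cost a (cell (\<Pi> a) x)) (K a) (cell (\<Pi> a) x)
      (frozen_part Fz a (cell (\<Pi> a) x)) (t a (cell (\<Pi> a) x))"
  shows "constrained_equilibrium Fz t"
  unfolding constrained_equilibrium_def
proof (intro conjI allI ballI)
  show "t \<in> profiles \<Pi> K" "keeps_frozen Fz t"
    using eq keeps_frozen_subset unfolding constrained_equilibrium_def by blast+
next
  fix j C assume C: "C \<in> \<Pi> j"
  show "exchange_optimal (reward t j) (cell_cost j C) (K j) C (frozen_part Fz j C) (t j C)"
  proof (cases "j = a \<and> x \<in> C")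
    case True
    with opt C show ?thesis by (auto simp: cell_eq)
  next
    case False
    then have "frozen_part (insert (a, x) Fz) j C = frozen_part Fz j C"
      unfolding frozen_part_def by auto
    with eq C show ?thesis unfolding constrained_equilibrium_def by metis
  qed
qed

lemma unfreeze_cell_move:
  assumes eq: "constrained_equilibrium (insert (a, x) Fz) t" and "(a, x) \<notin> Fz"
    and not_eq: "\<not> constrained_equilibrium Fz t" and C: "C = cell (\<Pi> a) x"
  obtains A' where "A' = t a C - {x} \<or> (\<exists>v\<in>C - t a C. A' = insert v (t a C - {x}))"
    and "x \<in> t a C" "A' \<subseteq> C" "card A' \<le> K a" "frozen_part Fz a C \<subseteq> A'"
    and "net_value (reward t a) (cell_cost a C) (t a C) < net_value (reward t a) (cell_cost a C) A'"
    and "exchange_optimal (\<lambda>w. prize a w (searchers \<Pi> t w + (if w \<in> A' then 0 else 1)))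
      (cell_cost a C) (K a) C (frozen_part Fz a C) A'"
proof -
  define A F where "A = t a C" and "F = frozen_part Fz a C"
  have "C \<in> \<Pi> a" "x \<in> C" using cell_mem unfolding C by blast+
  have prof: "t \<in> profiles \<Pi> K" and keeps: "keeps_frozen Fz t"
    using eq keeps_frozen_subset unfolding constrained_equilibrium_def by blast+
  have A: "A \<subseteq> C" "card A \<le> K a" "F \<subseteq> A" "finite A" "x \<in> A" "x \<notin> F"
    using profile_cell[OF prof \<open>C \<in> \<Pi> a\<close>] frozen_part_subset[OF keeps \<open>C \<in> \<Pi> a\<close>] eq assms(2)
    unfolding A_def F_def C constrained_equilibrium_def keeps_frozen_def frozen_part_def by auto
  have "frozen_part (insert (a, x) Fz) a C = insert x F"
    using \<open>x \<in> C\<close> unfolding F_def frozen_part_def by auto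
  then have opt: "exchange_optimal (reward t a) (cell_cost a C) (K a) C (insert x F) A"
    using eq \<open>C \<in> \<Pi> a\<close> unfolding constrained_equilibrium_def A_def by metis
  have not_opt: "\<not> exchange_optimal (reward t a) (cell_cost a C) (K a) C F A"
    using constrained_equilibrium_unfreezeI[OF eq] not_eq unfolding A_def F_def C by blast
  obtain A' where shape: "A' = A - {x} \<or> (\<exists>v\<in>C - A. A' = insert v (A - {x}))"
    and better: "net_value (reward t a) (cell_cost a C) A < net_value (reward t a) (cell_cost a C) A'"
    and opt': "exchange_optimal (reward t a) (cell_cost a C) (K a) C F A'"
    using exchange_optimal_unfreeze[OF finite A(1,2) discrete_convex_cell_cost A(5) opt not_opt] by blast
  have "card (insert v (A - {x})) = card A" if "v \<notin> A" for v
    using that A(4,5) card_Diff1_less[OF A(4), of x] by simp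
  then have A': "A' \<subseteq> C" "F \<subseteq> A'" "card A' \<le> K a"
    using shape A card_Diff1_le[of A x] by auto
  have "exchange_optimal (\<lambda>w. prize a w (searchers \<Pi> t w + (if w \<in> A' then 0 else 1)))
      (cell_cost a C) (K a) C F A'"
    using opt' unfolding reward_eq
    by (rule exchange_optimal_prize_mono) (use A'(1) searchers_cell[OF \<open>C \<in> \<Pi> a\<close>] in auto)
  with that[of A'] shape A A' better show thesis unfolding A_def F_def by blast
qed

lemma reaches_from_frozen_equilibrium:
  assumes eq: "constrained_equilibrium (insert (a, x) Fz) t" and "(a, x) \<notin> Fz"
  shows "reaches (constrained_equilibrium Fz) t"
proof (cases "constrained_equilibrium Fz t")
  case True
  with eq show ?thesis by (intro reaches_refl) (simp_all add: constrained_equilibrium_def)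
next
  case False
  define C where "C = cell (\<Pi> a) x"
  have C: "C \<in> \<Pi> a" "x \<in> C" using cell_mem unfolding C_def by blast+
  have prof: "t \<in> profiles \<Pi> K" and keeps: "keeps_frozen Fz t"
    and stable: "stable_at_load (insert (a, x) Fz) (searchers \<Pi> t) t"
    using eq keeps_frozen_subset unfolding constrained_equilibrium_iff_stable by blast+
  obtain A' where shape: "A' = t a C - {x} \<or> (\<exists>v\<in>C - t a C. A' = insert v (t a C - {x}))"
    and A': "x \<in> t a C" "A' \<subseteq> C" "card A' \<le> K a" "frozen_part Fz a C \<subseteq> A'"
    and better: "net_value (reward t a) (cell_cost a C) (t a C)
      < net_value (reward t a) (cell_cost a C) A'"
    and opt: "exchange_optimal (\<lambda>w. prize a w (searchers \<Pi> t w + (if w \<in> A' then 0 else 1)))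
      (cell_cost a C) (K a) C (frozen_part Fz a C) A'"
    using unfreeze_cell_move[OF eq assms(2) False C_def] by blast
  define s' where "s' = update t a C A'"
  have s': "improvement_step t s'" "s' \<in> profiles \<Pi> K" "keeps_frozen Fz s'"
      "stable_at_load Fz (searchers \<Pi> t) s'"
    using stable_improving_update[OF prof keeps stable C(1) _ A'(2-4) better opt] C(2)
    unfolding s'_def by auto
  have loads: "searchers \<Pi> s' w + (if w \<in> t a C then 1 else 0)
      = searchers \<Pi> t w + (if w \<in> A' then 1 else 0)" for w
    using searchers_update[OF C(1) _ A'(2), of t w] profile_cell[OF prof C(1)] unfolding s'_def by simp
  from shape have "reaches (constrained_equilibrium Fz) s'"
  proof
    assume "A' = t a C - {x}"
    then have "searchers \<Pi> s' w + (if w = x then 1 else 0) = searchers \<Pi> t w" for w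
      using loads[of w] A'(1) by (cases "w = x"; cases "w \<in> t a C") auto
    with s'(2-4) show ?thesis by (rule reaches_from_deficit)
  next
    assume "\<exists>v\<in>C - t a C. A' = insert v (t a C - {x})"
    then obtain v where "v \<notin> t a C" "A' = insert v (t a C - {x})" by blast
    moreover from this have "searchers \<Pi> s' w + (if w = x then 1 else 0)
        = searchers \<Pi> t w + (if w = v then 1 else 0)" for w
      using loads[of w] A'(1) by (cases "w = x"; cases "w = v"; cases "w \<in> t a C") auto
    ultimately show ?thesis
      using s'(2-4) A'(1) by (intro reaches_from_surplus[where x = x and z = v]) auto
  qed
  with prof s'(1) show ?thesis by (rule reaches_step)
qed

lemma improving_addition:
  assumes prof: "s \<in> profiles \<Pi> K" and keeps: "keeps_frozen Fz s"
    and all_frozen: "\<And>a x. x \<in> s a (cell (\<Pi> a) x) \<Longrightarrow> (a, x) \<in> Fz"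
    and not_eq: "\<not> constrained_equilibrium Fz s"
  obtains a x s' where "improvement_step s s'" "s' \<in> profiles \<Pi> K" "keeps_frozen Fz s'"
    "x \<in> s' a (cell (\<Pi> a) x)" "(a, x) \<notin> Fz"
proof -
  obtain i C where C: "C \<in> \<Pi> i"
    and not_opt: "\<not> exchange_optimal (reward s i) (cell_cost i C) (K i) C (frozen_part Fz i C) (s i C)"
    using prof keeps not_eq unfolding constrained_equilibrium_def by blast
  define A F where "A = s i C" and "F = frozen_part Fz i C"
  have A: "A \<subseteq> C" "card A \<le> K i" "F \<subseteq> A" "finite A"
    using profile_cell[OF prof C] frozen_part_subset[OF keeps C] unfolding A_def F_def by auto
  have "A - F = {}"
  proof -
    have "w \<in> F" if "w \<in> A" for w
    proof -
      from that A(1) have "w \<in> C" by blast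
      with that have "(i, w) \<in> Fz" using all_frozen[of w i] cell_eq[OF C] unfolding A_def by simp
      with \<open>w \<in> C\<close> show "w \<in> F" unfolding F_def frozen_part_def by simp
    qed
    then show ?thesis by blast
  qed
  with not_opt[folded A_def F_def]
  have "\<not> (card A < K i \<longrightarrow> (\<forall>w\<in>C - A. reward s i w \<le> cell_cost i C (card A + 1) - cell_cost i C (card A)))"
    unfolding exchange_optimal_def by simp
  then obtain w where "card A < K i" "w \<in> C - A"
    and gain: "cell_cost i C (card A + 1) - cell_cost i C (card A) < reward s i w"
    by (auto simp: not_le)
  then have X: "insert w A \<subseteq> C" "card (insert w A) \<le> K i" "F \<subseteq> insert w A"
    using A by auto
  have "net_value (reward s i) (cell_cost i C) A < net_value (reward s i) (cell_cost i C) (insert w A)"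
    using gain \<open>w \<in> C - A\<close> A(4) unfolding net_value_def by simp
  note s' = improving_update[OF prof keeps C X[unfolded F_def A_def] this[unfolded A_def]]
  moreover have "w \<in> update s i C (insert w A) i (cell (\<Pi> i) w)"
    using cell_eq[OF C] \<open>w \<in> C - A\<close> by (simp add: update_def)
  moreover have "(i, w) \<notin> Fz" using \<open>w \<in> C - A\<close> A(3) unfolding F_def frozen_part_def by auto
  ultimately show thesis using that[of "update s i C (insert w A)" w i] unfolding A_def by blast
qed

lemma reaches_constrained_equilibrium:
  "s \<in> profiles \<Pi> K \<Longrightarrow> keeps_frozen Fz s \<Longrightarrow> reaches (constrained_equilibrium Fz) s"
proof (induction "card (- Fz)" arbitrary: Fz s rule: less_induct)
  case less
  have unfrozen: "reaches (constrained_equilibrium Fz) t"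
    if "t \<in> profiles \<Pi> K" "keeps_frozen Fz t" "x \<in> t a (cell (\<Pi> a) x)" "(a, x) \<notin> Fz" for t a x
  proof -
    have "card (- insert (a, x) Fz) < card (- Fz)"
      using card_Diff1_less[of "- Fz" "(a, x)"] that(4) by (simp add: Compl_insert)
    moreover have "keeps_frozen (insert (a, x) Fz) t" using that(2,3) unfolding keeps_frozen_def by auto
    ultimately have "reaches (constrained_equilibrium (insert (a, x) Fz)) t"
      by (rule less.hyps[OF _ that(1)])
    then show ?thesis by (rule reaches_trans) (rule reaches_from_frozen_equilibrium[OF _ that(4)])
  qed
  show ?case
  proof (cases "\<exists>a x. x \<in> s a (cell (\<Pi> a) x) \<and> (a, x) \<notin> Fz")
    case True
    then obtain a x where "x \<in> s a (cell (\<Pi> a) x)" "(a, x) \<notin> Fz" by blast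
    with less.prems show ?thesis by (rule unfrozen)
  next
    case False
    show ?thesis
    proof (cases "constrained_equilibrium Fz s")
      case True
      with less.prems(1) show ?thesis by (rule reaches_refl)
    next
      case not_eq: False
      from False have all_frozen: "(a, x) \<in> Fz" if "x \<in> s a (cell (\<Pi> a) x)" for a x
        using that by blast
      obtain a x s' where s': "improvement_step s s'" "s' \<in> profiles \<Pi> K" "keeps_frozen Fz s'"
        "x \<in> s' a (cell (\<Pi> a) x)" "(a, x) \<notin> Fz"
        by (rule improving_addition[OF less.prems all_frozen not_eq])
      from less.prems(1) s'(1) unfrozen[OF s'(2-5)] show ?thesis by (rule reaches_step)
    qed
  qed
qed

lemma constrained_equilibrium_empty_imp_nash:
  assumes "constrained_equilibrium {} s"
  shows "is_nash \<Pi> \<mu> K c v s"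
  unfolding is_nash_def
proof (intro conjI allI ballI)
  show prof: "s \<in> profiles \<Pi> K" using assms unfolding constrained_equilibrium_def by simp
  fix i \<sigma> assume "\<sigma> \<in> strategies \<Pi> K i"
  then have \<sigma>: "\<sigma> C \<subseteq> C" "card (\<sigma> C) \<le> K i" if "C \<in> \<Pi> i" for C
    using that unfolding strategies_def by blast+
  have "payoff \<Pi> \<mu> c v (s(i := \<sigma>)) i = strategy_value (reward s i) i \<sigma>"
    using payoff_fun_upd \<sigma>(1) by blast
  also have "\<dots> \<le> strategy_value (reward s i) i (s i)"
    unfolding strategy_value_def
  proof (rule sum_mono)
    fix C assume C: "C \<in> \<Pi> i"
    have "exchange_optimal (reward s i) (cell_cost i C) (K i) C {} (s i C)"
      using assms C unfolding constrained_equilibrium_def frozen_part_def by simp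
    with profile_cell[OF prof C] \<sigma>[OF C] show
      "net_value (reward s i) (cell_cost i C) (\<sigma> C) \<le> net_value (reward s i) (cell_cost i C) (s i C)"
      by (intro exchange_optimal_imp_optimal[OF finite _ _ _ discrete_convex_cell_cost]) auto
  qed
  also have "\<dots> = payoff \<Pi> \<mu> c v s i" using payoff_eq_strategy_value[OF prof] by simp
  finally show "payoff \<Pi> \<mu> c v (s(i := \<sigma>)) i \<le> payoff \<Pi> \<mu> c v s i" .
qed

end

theorem proposition1:
  fixes \<Pi> :: "'i::finite \<Rightarrow> 'w::finite set set"
    and \<mu> :: "'w \<Rightarrow> real" and K :: "'i \<Rightarrow> nat" and c :: "'i \<Rightarrow> nat \<Rightarrow> real"
    and v :: "'i \<Rightarrow> nat \<Rightarrow> 'w \<Rightarrow> real" and vs :: "'w \<Rightarrow> real"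
    and s1 :: "'i \<Rightarrow> 'w set \<Rightarrow> 'w set"
  assumes "search_game \<Pi> \<mu> K c v vs"
    and "s1 \<in> profiles \<Pi> K"
  shows "\<exists>ps. improvement_path \<Pi> \<mu> K c v ps \<and> hd ps = s1 \<and> is_nash \<Pi> \<mu> K c v (last ps)"
proof -
  interpret search_game_setting \<Pi> \<mu> K c v vs by unfold_locales (rule assms(1))
  have "keeps_frozen {} s1" unfolding keeps_frozen_def by simp
  with assms(2) have "reaches (constrained_equilibrium {}) s1" by (rule reaches_constrained_equilibrium)
  then show ?thesis unfolding reaches_def using constrained_equilibrium_empty_imp_nash by blast
qed

end
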